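(* A supply graph $G$ has the strong uniqueness property if and only if $G$ contains no cycle of length $3$ or more (equivalently, $G$ is obtained from a forest by replacing some edges by sets of parallel edges).
   Context: A supply graph is a finite undirected graph $G=(V,E)$ without loops, parallel edges allowed (so cycles of length $2$ formed by two parallel edges may exist). Its directed version replaces each edge by two opposite arcs. A demand digraph is a simple digraph $H=(T,L)$ with $T\subseteq V$; its arcs are OD-pairs; routes for $(o,d)\in L$ are directed $(o,d)$-paths in the directed version of $G$. Users form a bounded interval with Lebesgue measure, measurably partitioned by OD-pair; each user picks a route of his OD-pair (measurably); flow on an arc is the measure of users using it; users have nonnegative continuous strictly increasing arc cost functions (measurable in the user); an equilibrium is a profile where every user takes a minimal-cost route. $(G,H)$ has the uniqueness property if for every measurable partition of users into OD-pairs and every such cost assignment, the flow on each arc is the same in all equilibria. $G$ has the strong uniqueness property if $(G,H)$ has the uniqueness property for every demand digraph $H=(T,L)$ with $T\subseteq V$. *)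

theory Defs
  imports "HOL-Analysis.Analysis"
begin

text \<open>Supply graph: finite vertex set V, finite edge set E (edges are abstract
  objects, so parallel edges are allowed), each edge e joining the two distinct
  vertices fst (ends e) and snd (ends e) (no loops).\<close>
definition supply_graph :: "'v set \<Rightarrow> 'e set \<Rightarrow> ('e \<Rightarrow> 'v \<times> 'v) \<Rightarrow> bool" where
  "supply_graph V E ends \<longleftrightarrow> finite V \<and> finite E \<and>
     (\<forall>e\<in>E. fst (ends e) \<in> V \<and> snd (ends e) \<in> V \<and> fst (ends e) \<noteq> snd (ends e))"

text \<open>Directed version: each edge e yields two opposite arcs (e,True) and (e,False).\<close>
definition arc_tail :: "('e \<Rightarrow> 'v \<times> 'v) \<Rightarrow> 'e \<times> bool \<Rightarrow> 'v" where
  "arc_tail ends a = (if snd a then fst (ends (fst a)) else snd (ends (fst a)))"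

definition arc_head :: "('e \<Rightarrow> 'v \<times> 'v) \<Rightarrow> 'e \<times> bool \<Rightarrow> 'v" where
  "arc_head ends a = (if snd a then snd (ends (fst a)) else fst (ends (fst a)))"

definition is_route :: "'e set \<Rightarrow> ('e \<Rightarrow> 'v \<times> 'v) \<Rightarrow> 'v \<Rightarrow> 'v \<Rightarrow> ('e \<times> bool) list \<Rightarrow> bool" where
  "is_route E ends s t P \<longleftrightarrow> P \<noteq> [] \<and> (\<forall>a\<in>set P. fst a \<in> E) \<and>
     arc_tail ends (hd P) = s \<and> arc_head ends (last P) = t \<and>
     (\<forall>i. Suc i < length P \<longrightarrow> arc_head ends (P ! i) = arc_tail ends (P ! Suc i)) \<and>
     distinct (map (arc_tail ends) P @ [t])"

definition demand_digraph :: "'v set \<Rightarrow> 'v set \<Rightarrow> ('v \<times> 'v) set \<Rightarrow> bool" where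
  "demand_digraph V T L \<longleftrightarrow> T \<subseteq> V \<and> L \<subseteq> T \<times> T \<and> (\<forall>x. (x, x) \<notin> L)"

definition valid_od :: "('v \<times> 'v) set \<Rightarrow> real set \<Rightarrow> (real \<Rightarrow> 'v \<times> 'v) \<Rightarrow> bool" where
  "valid_od L I od \<longleftrightarrow> (\<forall>u\<in>I. od u \<in> L) \<and> (\<forall>p\<in>L. {u\<in>I. od u = p} \<in> sets lebesgue)"

definition valid_costs :: "'e set \<Rightarrow> real set \<Rightarrow> (real \<Rightarrow> 'e \<times> bool \<Rightarrow> real \<Rightarrow> real) \<Rightarrow> bool" where
  "valid_costs E I c \<longleftrightarrow>
     (\<forall>u\<in>I. \<forall>a. fst a \<in> E \<longrightarrow>
        continuous_on {0..} (c u a) \<and> strict_mono_on {0..} (c u a) \<and> (\<forall>x\<ge>0. 0 \<le> c u a x)) \<and>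
     (\<forall>a x. fst a \<in> E \<longrightarrow> set_borel_measurable lebesgue I (\<lambda>u. c u a x))"

definition flow :: "real set \<Rightarrow> (real \<Rightarrow> ('e \<times> bool) list) \<Rightarrow> 'e \<times> bool \<Rightarrow> real" where
  "flow I \<sigma> a = measure lebesgue {u\<in>I. a \<in> set (\<sigma> u)}"

definition route_cost :: "real set \<Rightarrow> (real \<Rightarrow> 'e \<times> bool \<Rightarrow> real \<Rightarrow> real) \<Rightarrow>
    (real \<Rightarrow> ('e \<times> bool) list) \<Rightarrow> real \<Rightarrow> ('e \<times> bool) list \<Rightarrow> real" where
  "route_cost I c \<sigma> u P = (\<Sum>a\<leftarrow>P. c u a (flow I \<sigma> a))"

definition strategy_profile :: "'e set \<Rightarrow> ('e \<Rightarrow> 'v \<times> 'v) \<Rightarrow> real set \<Rightarrow>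
    (real \<Rightarrow> 'v \<times> 'v) \<Rightarrow> (real \<Rightarrow> ('e \<times> bool) list) \<Rightarrow> bool" where
  "strategy_profile E ends I od \<sigma> \<longleftrightarrow>
     (\<forall>u\<in>I. is_route E ends (fst (od u)) (snd (od u)) (\<sigma> u)) \<and>
     (\<forall>P. {u\<in>I. \<sigma> u = P} \<in> sets lebesgue)"

definition equilibrium :: "'e set \<Rightarrow> ('e \<Rightarrow> 'v \<times> 'v) \<Rightarrow> real set \<Rightarrow>
    (real \<Rightarrow> 'v \<times> 'v) \<Rightarrow> (real \<Rightarrow> 'e \<times> bool \<Rightarrow> real \<Rightarrow> real) \<Rightarrow> (real \<Rightarrow> ('e \<times> bool) list) \<Rightarrow> bool" where
  "equilibrium E ends I od c \<sigma> \<longleftrightarrow> strategy_profile E ends I od \<sigma> \<and>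
     (\<forall>u\<in>I. \<forall>P. is_route E ends (fst (od u)) (snd (od u)) P \<longrightarrow>
        route_cost I c \<sigma> u (\<sigma> u) \<le> route_cost I c \<sigma> u P)"

text \<open>Uniqueness property of (G,H); the users form a bounded interval {lo..hi}.\<close>
definition uniqueness_property :: "'v set \<Rightarrow> 'e set \<Rightarrow> ('e \<Rightarrow> 'v \<times> 'v) \<Rightarrow>
    'v set \<Rightarrow> ('v \<times> 'v) set \<Rightarrow> bool" where
  "uniqueness_property V E ends T L \<longleftrightarrow>
     (\<forall>(lo::real) hi od c \<sigma>1 \<sigma>2.
        valid_od L {lo..hi} od \<longrightarrow> valid_costs E {lo..hi} c \<longrightarrow>
        equilibrium E ends {lo..hi} od c \<sigma>1 \<longrightarrow> equilibrium E ends {lo..hi} od c \<sigma>2 \<longrightarrow>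
        (\<forall>a. fst a \<in> E \<longrightarrow> flow {lo..hi} \<sigma>1 a = flow {lo..hi} \<sigma>2 a))"

definition strong_uniqueness :: "'v set \<Rightarrow> 'e set \<Rightarrow> ('e \<Rightarrow> 'v \<times> 'v) \<Rightarrow> bool" where
  "strong_uniqueness V E ends \<longleftrightarrow>
     (\<forall>T L. demand_digraph V T L \<longrightarrow> uniqueness_property V E ends T L)"

definition has_long_cycle :: "'v set \<Rightarrow> 'e set \<Rightarrow> ('e \<Rightarrow> 'v \<times> 'v) \<Rightarrow> bool" where
  "has_long_cycle V E ends \<longleftrightarrow>
     (\<exists>vs. distinct vs \<and> length vs \<ge> 3 \<and> set vs \<subseteq> V \<and>
        (\<forall>i<length vs. \<exists>e\<in>E.
           {fst (ends e), snd (ends e)} = {vs ! i, vs ! ((i + 1) mod length vs)}))"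

end

theory Submission
  imports Defs
begin

(*
  (<=) Suppose G has no long cycle and let x -> y be an arc used by some route
  from s to t.  Then every (s,t)-route uses an arc from x to y as well:
  otherwise y would reach x avoiding all edges joining x and y (via t and s),
  and together with such an edge this would close a long cycle.  Given two
  equilibria sigma1, sigma2, consider the set B of arcs parallel to a fixed arc
  (same tail and head) whose flow is strictly smaller under sigma2.  An exchange
  argument shows that every user routed over B by sigma1 is also routed over B
  by sigma2, so the total flow on B cannot decrease: contradiction.

  (=>) Given a cycle v_0, ..., v_{k-1} with k >= 3, we exhibit three groups of
  users with OD-pairs (v_0,v_2), (v_0,v_1), (v_2,v_1), cost functions and two
  equilibria with different flows on the arc v_1 -> v_2.  Equilibrium is
  certified by node potentials: every arc costs at least the potential
  difference of its ends, with equality along the chosen routes.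
*)

definition route_vertices :: "('e \<Rightarrow> 'v \<times> 'v) \<Rightarrow> ('e \<times> bool) list \<Rightarrow> 'v \<Rightarrow> 'v list" where
  "route_vertices ends P t = map (arc_tail ends) P @ [t]"

lemma route_vertices_arc:
  assumes "is_route E ends s t P" "l < length P"
  shows "arc_tail ends (P!l) = route_vertices ends P t ! l"
    and "arc_head ends (P!l) = route_vertices ends P t ! Suc l"
proof -
  show "arc_tail ends (P!l) = route_vertices ends P t ! l"
    using assms by (simp add: route_vertices_def nth_append)
  show "arc_head ends (P!l) = route_vertices ends P t ! Suc l"
  proof (cases "Suc l < length P")
    case True
    then show ?thesis using assms unfolding is_route_def route_vertices_def by (simp add: nth_append)
  next
    case False
    then have "l = length P - 1" using assms by simp
    then have "P ! l = last P" using assms unfolding is_route_def by (simp add: last_conv_nth)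
    then show ?thesis using assms False unfolding is_route_def route_vertices_def by (simp add: nth_append)
  qed
qed

lemma route_vertices_basic:
  assumes "is_route E ends s t P"
  shows "distinct (route_vertices ends P t)"
    and "length (route_vertices ends P t) = Suc (length P)"
    and "route_vertices ends P t ! 0 = s"
    and "route_vertices ends P t ! length P = t"
proof -
  show "distinct (route_vertices ends P t)" using assms unfolding is_route_def route_vertices_def by simp
  show "length (route_vertices ends P t) = Suc (length P)" unfolding route_vertices_def by simp
  show "route_vertices ends P t ! 0 = s" "route_vertices ends P t ! length P = t"
    using assms unfolding is_route_def route_vertices_def by (auto simp: nth_append hd_conv_nth)
qed

lemma arc_ends: "{fst (ends (fst a)), snd (ends (fst a))} = {arc_tail ends a, arc_head ends a}"
  unfolding arc_tail_def arc_head_def by auto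

section \<open>Reachability in a graph without long cycles\<close>

lemma chain_rtrancl:
  assumes "\<And>l. i \<le> l \<Longrightarrow> l < j \<Longrightarrow> (f l, f (Suc l)) \<in> R" "i \<le> j"
  shows "(f i, f j) \<in> R\<^sup>*"
  using assms
proof (induction j)
  case 0 then show ?case by simp
next
  case (Suc j)
  show ?case
  proof (cases "i \<le> j")
    case True
    then have "(f i, f j) \<in> R\<^sup>*" using Suc by auto
    moreover have "(f j, f (Suc j)) \<in> R" using Suc True by auto
    ultimately show ?thesis by simp
  next
    case False then have "i = Suc j" using Suc by simp
    then show ?thesis by simp
  qed
qed

lemma rtrancl_simple_path:
  assumes "(u, v) \<in> R\<^sup>*"
  shows "\<exists>ws. ws \<noteq> [] \<and> hd ws = u \<and> last ws = v \<and> distinct ws \<and>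
           (\<forall>i. Suc i < length ws \<longrightarrow> (ws!i, ws!Suc i) \<in> R)"
  using assms
proof (induction rule: converse_rtrancl_induct)
  case base
  then show ?case by (intro exI[of _ "[v]"]) auto
next
  case (step u w)
  then obtain ws where ws: "ws \<noteq> []" "hd ws = w" "last ws = v" "distinct ws"
    "\<forall>i. Suc i < length ws \<longrightarrow> (ws!i, ws!Suc i) \<in> R" by blast
  show ?case
  proof (cases "u \<in> set ws")
    case True
    then obtain p q where pq: "ws = p @ u # q" by (meson split_list)
    have "\<forall>i. Suc i < length (u#q) \<longrightarrow> ((u#q)!i, (u#q)!Suc i) \<in> R"
    proof (intro allI impI)
      fix i assume "Suc i < length (u#q)"
      then have "Suc (length p + i) < length ws" using pq by simp
      then have "(ws!(length p + i), ws!Suc (length p + i)) \<in> R" using ws by blast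
      then show "((u#q)!i, (u#q)!Suc i) \<in> R" using pq
        by (simp add: nth_append)
    qed
    moreover have "last (u#q) = v" using ws pq by (metis last_appendR list.distinct(1))
    moreover have "distinct (u#q)" using ws pq by simp
    ultimately show ?thesis by (intro exI[of _ "u#q"]) auto
  next
    case False
    have "\<forall>i. Suc i < length (u#ws) \<longrightarrow> ((u#ws)!i, (u#ws)!Suc i) \<in> R"
    proof (intro allI impI)
      fix i assume i: "Suc i < length (u#ws)"
      show "((u#ws)!i, (u#ws)!Suc i) \<in> R"
      proof (cases i)
        case 0 then show ?thesis using step ws by (simp add: hd_conv_nth)
      next
        case (Suc j) then show ?thesis using ws i by simp
      qed
    qed
    then show ?thesis using ws False by (intro exI[of _ "u#ws"]) auto
  qed
qed

definition adj_avoiding :: "'e set \<Rightarrow> ('e \<Rightarrow> 'v \<times> 'v) \<Rightarrow> 'v \<Rightarrow> 'v \<Rightarrow> ('v \<times> 'v) set" where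
  "adj_avoiding E ends x y =
     {(u, w). (\<exists>e\<in>E. {fst (ends e), snd (ends e)} = {u, w}) \<and> {u, w} \<noteq> {x, y}}"

lemma adj_avoiding_rtrancl_sym:
  "(u, w) \<in> (adj_avoiding E ends x y)\<^sup>* \<Longrightarrow> (w, u) \<in> (adj_avoiding E ends x y)\<^sup>*"
proof -
  have "sym (adj_avoiding E ends x y)"
    unfolding adj_avoiding_def sym_def by (auto simp: insert_commute)
  then show "(u, w) \<in> (adj_avoiding E ends x y)\<^sup>* \<Longrightarrow> (w, u) \<in> (adj_avoiding E ends x y)\<^sup>*"
    using sym_rtrancl by (meson symD)
qed

text \<open>If y reaches x without using an edge joining them, adding such an edge closes a
  cycle; it has length at least 3 because the path cannot be a single x-y edge.\<close>
lemma long_cycle_through_edge: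
  assumes sg: "supply_graph V E ends" and e0: "e0 \<in> E" "{fst (ends e0), snd (ends e0)} = {x, y}"
    and xy: "x \<noteq> y" and reach: "(y, x) \<in> (adj_avoiding E ends x y)\<^sup>*"
  shows "has_long_cycle V E ends"
proof -
  obtain ws where ws: "ws \<noteq> []" "hd ws = y" "last ws = x" "distinct ws"
    "\<forall>i. Suc i < length ws \<longrightarrow> (ws!i, ws!Suc i) \<in> adj_avoiding E ends x y"
    using rtrancl_simple_path[OF reach] by blast
  have ends: "ws!0 = y" "ws!(length ws - 1) = x"
    using ws by (simp_all add: hd_conv_nth last_conv_nth)
  have "length ws \<noteq> 1" using ends xy by auto
  moreover have "length ws \<noteq> 2"
  proof
    assume "length ws = 2"
    then have "(y, x) \<in> adj_avoiding E ends x y" using ws(5) ends by fastforce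
    then show False unfolding adj_avoiding_def by (auto simp: insert_commute)
  qed
  moreover have "length ws \<noteq> 0" using ws(1) by simp
  ultimately have len: "length ws \<ge> 3" by linarith
  have edge: "\<exists>e\<in>E. {fst (ends e), snd (ends e)} = {ws ! j, ws ! ((j + 1) mod length ws)}"
    if j: "j < length ws" for j
  proof (cases "Suc j < length ws")
    case True
    then show ?thesis using ws(5) unfolding adj_avoiding_def by auto
  next
    case False
    then have "j = length ws - 1" using j by simp
    then have "ws!j = x" "ws!((j+1) mod length ws) = y" using ends j ws(1) by auto
    then show ?thesis using e0 by (metis insert_commute)
  qed
  have "set ws \<subseteq> V"
  proof
    fix z assume "z \<in> set ws"
    then obtain j where j: "j < length ws" "ws!j = z" by (meson in_set_conv_nth)
    then show "z \<in> V" using edge[OF j(1)] sg unfolding supply_graph_def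
      by (metis insertCI doubleton_eq_iff)
  qed
  then show ?thesis unfolding has_long_cycle_def using ws(4) len edge by blast
qed

lemma route_segment_reach:
  assumes P: "is_route E ends s t P" and ij: "i \<le> j" "j \<le> length P"
    and avoid: "\<And>l. i \<le> l \<Longrightarrow> l < j \<Longrightarrow>
       {route_vertices ends P t ! l, route_vertices ends P t ! Suc l} \<noteq> {x, y}"
  shows "(route_vertices ends P t ! i, route_vertices ends P t ! j) \<in> (adj_avoiding E ends x y)\<^sup>*"
proof (rule chain_rtrancl[OF _ ij(1)])
  fix l assume l: "i \<le> l" "l < j"
  then have "l < length P" using ij by simp
  then have "fst (P!l) \<in> E" using P unfolding is_route_def by simp
  moreover have "{fst (ends (fst (P!l))), snd (ends (fst (P!l)))} =
         {route_vertices ends P t ! l, route_vertices ends P t ! Suc l}"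
    using route_vertices_arc[OF P \<open>l < length P\<close>] arc_ends by metis
  ultimately show "(route_vertices ends P t ! l, route_vertices ends P t ! Suc l) \<in> adj_avoiding E ends x y"
    using avoid[OF l] unfolding adj_avoiding_def by blast
qed

lemma route_segment_reach_avoiding_vertex:
  assumes P: "is_route E ends s t P" and ij: "i \<le> j" "j \<le> length P"
    and m: "m \<le> length P" "m < i \<or> j < m" "route_vertices ends P t ! m \<in> {x, y}"
  shows "(route_vertices ends P t ! i, route_vertices ends P t ! j) \<in> (adj_avoiding E ends x y)\<^sup>*"
proof (rule route_segment_reach[OF P ij])
  let ?W = "route_vertices ends P t"
  fix l assume "i \<le> l" "l < j"
  then have "?W!l \<noteq> ?W!m" "?W!Suc l \<noteq> ?W!m"
    using m ij route_vertices_basic[OF P] by (auto simp: nth_eq_iff_index_eq)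
  then show "{?W!l, ?W!Suc l} \<noteq> {x, y}" using m(3) by (auto simp: doubleton_eq_iff)
qed

lemma forest_route_arc:
  assumes sg: "supply_graph V E ends" and nc: "\<not> has_long_cycle V E ends"
    and P: "is_route E ends s t P" and Q: "is_route E ends s t Q" and a: "a \<in> set P"
  shows "\<exists>b\<in>set Q. arc_tail ends b = arc_tail ends a \<and> arc_head ends b = arc_head ends a"
proof (rule ccontr)
  assume no_arc: "\<not> ?thesis"
  define x where "x = arc_tail ends a"
  define y where "y = arc_head ends a"
  let ?R = "adj_avoiding E ends x y"
  let ?W = "route_vertices ends P t" and ?W' = "route_vertices ends Q t"
  note W = route_vertices_basic[OF P] and W' = route_vertices_basic[OF Q]
  have aE: "fst a \<in> E" using P a unfolding is_route_def by auto
  have xy: "x \<noteq> y" using sg aE unfolding supply_graph_def x_def y_def arc_tail_def arc_head_def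
    by auto
  obtain i where i: "i < length P" "P!i = a" using a by (meson in_set_conv_nth)
  have Wi: "?W!i = x" "?W!Suc i = y" using route_vertices_arc[OF P i(1)] i x_def y_def by auto
  have sx: "(s, x) \<in> ?R\<^sup>*"
    using route_segment_reach_avoiding_vertex[OF P _ _ _ _, of 0 i "Suc i"] i W Wi by auto
  have yt: "(y, t) \<in> ?R\<^sup>*"
    using route_segment_reach_avoiding_vertex[OF P _ _ _ _, of "Suc i" "length P" i] i W Wi by auto
  have "(y, x) \<in> ?R\<^sup>*"
  proof (cases "\<exists>j<length Q. ?W'!j = y \<and> ?W'!Suc j = x")
    case True
    then obtain j where j: "j < length Q" "?W'!j = y" "?W'!Suc j = x" by blast
    have "(x, t) \<in> ?R\<^sup>*"
      using route_segment_reach_avoiding_vertex[OF Q _ _ _ _, of "Suc j" "length Q" j] j W' by auto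
    then show ?thesis using yt adj_avoiding_rtrancl_sym by (meson rtrancl_trans)
  next
    case False
    text \<open>Q traverses no x-y edge in either direction, so s and t are connected in ?R.\<close>
    have "(?W'!0, ?W'!length Q) \<in> ?R\<^sup>*"
    proof (rule route_segment_reach[OF Q])
      fix l assume l: "0 \<le> l" "l < length Q"
      have "Q!l \<in> set Q" using l by simp
      then have "\<not> (?W'!l = x \<and> ?W'!Suc l = y)"
        using no_arc route_vertices_arc[OF Q l(2)] unfolding x_def y_def by auto
      then show "{?W'!l, ?W'!Suc l} \<noteq> {x, y}" using False l xy by (auto simp: doubleton_eq_iff)
    qed simp_all
    then have "(t, s) \<in> ?R\<^sup>*" using W' adj_avoiding_rtrancl_sym by simp
    then show ?thesis using yt sx by (meson rtrancl_trans)
  qed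
  moreover have "{fst (ends (fst a)), snd (ends (fst a))} = {x, y}"
    using arc_ends x_def y_def by metis
  ultimately have "has_long_cycle V E ends" using long_cycle_through_edge[OF sg aE] xy by blast
  then show False using nc by simp
qed

section \<open>Uniqueness of the flow in graphs without long cycles\<close>

lemma route_update:
  assumes P: "is_route E ends s t P" and i: "i < length P" and bE: "fst b \<in> E"
    and bt: "arc_tail ends b = arc_tail ends (P!i)" and bh: "arc_head ends b = arc_head ends (P!i)"
  shows "is_route E ends s t (P[i:=b])"
proof -
  let ?P = "P[i:=b]"
  have mt: "map (arc_tail ends) ?P = map (arc_tail ends) P"
    using i bt by (metis length_map list_update_id map_update nth_map)
  have mh: "map (arc_head ends) ?P = map (arc_head ends) P"
    using i bh by (metis length_map list_update_id map_update nth_map)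
  have ne: "P \<noteq> []" "?P \<noteq> []" using P unfolding is_route_def by auto
  have "arc_tail ends (hd ?P) = arc_tail ends (hd P)" using mt ne by (metis hd_map)
  moreover have "arc_head ends (last ?P) = arc_head ends (last P)" using mh ne by (metis last_map)
  moreover have "arc_head ends (?P ! j) = arc_tail ends (?P ! Suc j)" if j: "Suc j < length ?P" for j
  proof -
    have "arc_head ends (?P ! j) = map (arc_head ends) ?P ! j" using j by simp
    also have "\<dots> = map (arc_tail ends) ?P ! Suc j" using j P mt mh unfolding is_route_def by simp
    also have "\<dots> = arc_tail ends (?P ! Suc j)" using j by simp
    finally show ?thesis .
  qed
  moreover have "\<forall>a\<in>set ?P. fst a \<in> E" using P bE set_update_subset_insert unfolding is_route_def
    by fastforce
  ultimately show ?thesis using P ne mt unfolding is_route_def by simp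
qed

lemma sum_list_map_update:
  fixes f :: "'a \<Rightarrow> 'b::ab_group_add"
  shows "i < length xs \<Longrightarrow> sum_list (map f (xs[i:=b])) = sum_list (map f xs) - f (xs!i) + f b"
  by (induction xs arbitrary: i) (auto split: nat.split)

lemma route_tail_inj:
  assumes "is_route E ends s t P" "a \<in> set P" "a' \<in> set P" "arc_tail ends a = arc_tail ends a'"
  shows "a = a'"
  using assms unfolding is_route_def by (auto simp: distinct_map dest: inj_onD)

definition users :: "real set \<Rightarrow> (real \<Rightarrow> ('e \<times> bool) list) \<Rightarrow> 'e \<times> bool \<Rightarrow> real set" where
  "users I \<sigma> a = {u\<in>I. a \<in> set (\<sigma> u)}"

lemma flow_users: "flow I \<sigma> a = measure lebesgue (users I \<sigma> a)"
  unfolding flow_def users_def ..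

text \<open>Users of an arc are measurable: only finitely many routes exist.\<close>
lemma users_fmeasurable:
  assumes sp: "strategy_profile E ends I od \<sigma>" and fE: "finite E" and I: "I \<in> fmeasurable lebesgue"
  shows "users I \<sigma> a \<in> fmeasurable lebesgue"
proof -
  define Rts where "Rts = {P. set P \<subseteq> E \<times> (UNIV::bool set) \<and> distinct P}"
  have "finite Rts" unfolding Rts_def using fE by (intro finite_subset_distinct) simp
  have route_Rts: "\<sigma> u \<in> Rts" if "u \<in> I" for u
  proof -
    have "is_route E ends (fst (od u)) (snd (od u)) (\<sigma> u)"
      using sp that unfolding strategy_profile_def by blast
    then have "distinct (map (arc_tail ends) (\<sigma> u))" "\<forall>a\<in>set (\<sigma> u). fst a \<in> E"
      unfolding is_route_def by simp_all
    then show ?thesis unfolding Rts_def using distinct_map by force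
  qed
  have "users I \<sigma> a = (\<Union>P\<in>{P\<in>Rts. a \<in> set P}. {u\<in>I. \<sigma> u = P})"
    using route_Rts unfolding users_def by blast
  also have "\<dots> \<in> sets lebesgue"
  proof (rule sets.finite_UN)
    show "finite {P\<in>Rts. a \<in> set P}" using \<open>finite Rts\<close> by simp
  qed (use sp in \<open>simp add: strategy_profile_def\<close>)
  finally have "users I \<sigma> a \<in> sets lebesgue" .
  moreover have "users I \<sigma> a \<subseteq> I" unfolding users_def by auto
  ultimately show ?thesis using fmeasurableI2[OF I] by blast
qed

lemma equilibrium_exchange:
  assumes eq: "equilibrium E ends I od c \<sigma>" and u: "u \<in> I" and a: "a \<in> set (\<sigma> u)"
    and bE: "fst b \<in> E" and bt: "arc_tail ends b = arc_tail ends a"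
    and bh: "arc_head ends b = arc_head ends a"
  shows "c u a (flow I \<sigma> a) \<le> c u b (flow I \<sigma> b)"
proof -
  have r: "is_route E ends (fst (od u)) (snd (od u)) (\<sigma> u)"
    using eq u unfolding equilibrium_def strategy_profile_def by auto
  obtain i where i: "i < length (\<sigma> u)" "\<sigma> u ! i = a" using a by (meson in_set_conv_nth)
  have "is_route E ends (fst (od u)) (snd (od u)) ((\<sigma> u)[i:=b])"
    using route_update[OF r i(1) bE] i bt bh by simp
  then have "route_cost I c \<sigma> u (\<sigma> u) \<le> route_cost I c \<sigma> u ((\<sigma> u)[i:=b])"
    using eq u unfolding equilibrium_def by blast
  then show ?thesis using i unfolding route_cost_def by (simp add: sum_list_map_update)
qed

lemma flow_decrease_propagates:
  assumes vc: "valid_costs E I c"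
    and e1: "equilibrium E ends I od c \<sigma>1" and e2: "equilibrium E ends I od c \<sigma>2"
    and u: "u \<in> I" and a: "a \<in> set (\<sigma>1 u)" and b: "b \<in> set (\<sigma>2 u)"
    and bt: "arc_tail ends b = arc_tail ends a" and bh: "arc_head ends b = arc_head ends a"
    and lt: "flow I \<sigma>2 a < flow I \<sigma>1 a"
  shows "flow I \<sigma>2 b < flow I \<sigma>1 b"
proof (rule ccontr)
  assume "\<not> ?thesis"
  then have le: "flow I \<sigma>1 b \<le> flow I \<sigma>2 b" by simp
  have aE: "fst a \<in> E" and bE: "fst b \<in> E"
    using e1 e2 u a b unfolding equilibrium_def strategy_profile_def is_route_def by auto
  have "\<forall>u\<in>I. \<forall>a. fst a \<in> E \<longrightarrow> strict_mono_on {0..} (c u a)"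
    using vc unfolding valid_costs_def by blast
  then have smono: "strict_mono_on {0..} (c u a)" "strict_mono_on {0..} (c u b)"
    using u aE bE by blast+
  have "c u a (flow I \<sigma>2 a) < c u a (flow I \<sigma>1 a)"
    using strict_mono_onD[OF smono(1) _ _ lt] by (simp add: flow_def)
  also have "\<dots> \<le> c u b (flow I \<sigma>1 b)" using equilibrium_exchange[OF e1 u a bE bt bh] .
  also have "\<dots> \<le> c u b (flow I \<sigma>2 b)"
    using strict_mono_on_leD[OF smono(2) _ _ le] by (simp add: flow_def)
  also have "\<dots> \<le> c u a (flow I \<sigma>2 a)"
    using equilibrium_exchange[OF e2 u b aE] bt bh by simp
  finally show False by simp
qed

text \<open>A route uses at most one arc of a family of arcs with common tail, so the users of the
  family are the disjoint union of the users of its arcs.\<close>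
lemma bundle_users_measure:
  assumes sp: "strategy_profile E ends I od \<sigma>" and fE: "finite E" and I: "I \<in> fmeasurable lebesgue"
    and B: "finite B" and tail: "\<And>a b. a \<in> B \<Longrightarrow> b \<in> B \<Longrightarrow> arc_tail ends a = arc_tail ends b"
  shows "measure lebesgue (\<Union>a\<in>B. users I \<sigma> a) = (\<Sum>a\<in>B. flow I \<sigma> a)"
proof -
  have "disjoint_family_on (users I \<sigma>) B"
    unfolding disjoint_family_on_def
  proof (intro ballI impI equals0I)
    fix m n u assume mn: "m \<in> B" "n \<in> B" "m \<noteq> n" and "u \<in> users I \<sigma> m \<inter> users I \<sigma> n"
    then have u: "u \<in> I" "m \<in> set (\<sigma> u)" "n \<in> set (\<sigma> u)" unfolding users_def by auto
    then have "is_route E ends (fst (od u)) (snd (od u)) (\<sigma> u)"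
      using sp unfolding strategy_profile_def by blast
    then have "m = n" by (rule route_tail_inj[OF _ u(2,3) tail[OF mn(1,2)]])
    then show False using mn(3) by simp
  qed
  moreover have "users I \<sigma> a \<in> sets lebesgue" for a
    using fmeasurableD[OF users_fmeasurable[OF sp fE I]] .
  moreover have "emeasure lebesgue (users I \<sigma> a) \<noteq> \<infinity>" for a
    using fmeasurableD2[OF users_fmeasurable[OF sp fE I]] by (metis infinity_ennreal_def)
  ultimately show ?thesis unfolding flow_users using B by (intro measure_finite_Union) auto
qed

text \<open>B collects the arcs parallel to a0 whose flow decreases; every user routed
  over B by sigma1 is routed over B by sigma2, contradicting the decrease of the total.\<close>
lemma flow_no_decrease:
  assumes sg: "supply_graph V E ends" and nc: "\<not> has_long_cycle V E ends"
    and vc: "valid_costs E I c" and I: "I \<in> fmeasurable lebesgue"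
    and e1: "equilibrium E ends I od c \<sigma>1" and e2: "equilibrium E ends I od c \<sigma>2"
    and a0E: "fst a0 \<in> E"
  shows "\<not> flow I \<sigma>2 a0 < flow I \<sigma>1 a0"
proof
  assume lt0: "flow I \<sigma>2 a0 < flow I \<sigma>1 a0"
  have fE: "finite E" using sg unfolding supply_graph_def by simp
  have sp1: "strategy_profile E ends I od \<sigma>1" and sp2: "strategy_profile E ends I od \<sigma>2"
    using e1 e2 unfolding equilibrium_def by auto
  define B where "B = {a. fst a \<in> E \<and> arc_tail ends a = arc_tail ends a0 \<and>
                         arc_head ends a = arc_head ends a0 \<and> flow I \<sigma>2 a < flow I \<sigma>1 a}"
  have "B \<subseteq> E \<times> UNIV" unfolding B_def by force
  then have finB: "finite B" using fE by (simp add: finite_subset)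
  have tail: "\<And>a b. a \<in> B \<Longrightarrow> b \<in> B \<Longrightarrow> arc_tail ends a = arc_tail ends b" unfolding B_def by simp
  have sub: "(\<Union>a\<in>B. users I \<sigma>1 a) \<subseteq> (\<Union>a\<in>B. users I \<sigma>2 a)"
  proof
    fix u assume "u \<in> (\<Union>a\<in>B. users I \<sigma>1 a)"
    then obtain a where a: "a \<in> B" "u \<in> I" "a \<in> set (\<sigma>1 u)" unfolding users_def by auto
    have r: "is_route E ends (fst (od u)) (snd (od u)) (\<sigma>1 u)"
            "is_route E ends (fst (od u)) (snd (od u)) (\<sigma>2 u)"
      using sp1 sp2 a(2) unfolding strategy_profile_def by auto
    obtain b where b: "b \<in> set (\<sigma>2 u)" "arc_tail ends b = arc_tail ends a" "arc_head ends b = arc_head ends a"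
      using forest_route_arc[OF sg nc r a(3)] by blast
    have "flow I \<sigma>2 b < flow I \<sigma>1 b"
      using flow_decrease_propagates[OF vc e1 e2 a(2,3) b] a(1) unfolding B_def by simp
    moreover have "fst b \<in> E" using r(2) b(1) unfolding is_route_def by auto
    ultimately have "b \<in> B" using a(1) b unfolding B_def by simp
    then show "u \<in> (\<Union>a\<in>B. users I \<sigma>2 a)" using a b unfolding users_def by auto
  qed
  have "(\<Sum>a\<in>B. flow I \<sigma>1 a) = measure lebesgue (\<Union>a\<in>B. users I \<sigma>1 a)"
    using bundle_users_measure[OF sp1 fE I finB tail] by simp
  also have "\<dots> \<le> measure lebesgue (\<Union>a\<in>B. users I \<sigma>2 a)"
  proof (rule measure_mono_fmeasurable[OF sub])
    show "(\<Union>a\<in>B. users I \<sigma>1 a) \<in> sets lebesgue"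
      using finB fmeasurableD[OF users_fmeasurable[OF sp1 fE I]] by blast
    show "(\<Union>a\<in>B. users I \<sigma>2 a) \<in> fmeasurable lebesgue"
      using finB users_fmeasurable[OF sp2 fE I] by (intro fmeasurable.finite_UN) auto
  qed
  also have "\<dots> = (\<Sum>a\<in>B. flow I \<sigma>2 a)" using bundle_users_measure[OF sp2 fE I finB tail] .
  finally have "(\<Sum>a\<in>B. flow I \<sigma>1 a) \<le> (\<Sum>a\<in>B. flow I \<sigma>2 a)" .
  moreover have "a0 \<in> B" using a0E lt0 unfolding B_def by simp
  then have "B \<noteq> {}" by blast
  then have "(\<Sum>a\<in>B. flow I \<sigma>2 a) < (\<Sum>a\<in>B. flow I \<sigma>1 a)"
    using finB by (intro sum_strict_mono) (auto simp: B_def)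
  ultimately show False by simp
qed

theorem no_long_cycle_imp_strong_uniqueness:
  assumes sg: "supply_graph V E ends" and nc: "\<not> has_long_cycle V E ends"
  shows "strong_uniqueness V E ends"
  unfolding strong_uniqueness_def uniqueness_property_def
proof (intro allI impI)
  fix T L lo hi od c \<sigma>1 \<sigma>2 and a :: "'b \<times> bool"
  assume vc: "valid_costs E {lo..hi} c" and e1: "equilibrium E ends {lo..hi} od c \<sigma>1"
    and e2: "equilibrium E ends {lo..hi} od c \<sigma>2" and aE: "fst a \<in> E"
  have I: "{lo..hi} \<in> fmeasurable lebesgue" by (rule lmeasurable_interval)
  show "flow {lo..hi} \<sigma>1 a = flow {lo..hi} \<sigma>2 a"
    using flow_no_decrease[OF sg nc vc I e1 e2 aE] flow_no_decrease[OF sg nc vc I e2 e1 aE]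
    by linarith
qed

text \<open>Users {0..7} split into three groups {0..2}, (2..5], (5..7] of measures 2, 3, 2;
  a profile or cost that is constant on each group is measurable.\<close>

lemma three_groups_sets: "{u\<in>{0..7::real}. (if u \<le> 2 then X else if u \<le> 5 then Y else Z) = p} \<in> sets lebesgue"
proof -
  have "{u\<in>{0..7::real}. (if u \<le> 2 then X else if u \<le> 5 then Y else Z) = p} \<in> sets borel"
    by measurable
  then show ?thesis by simp
qed

lemma three_groups_measurable: "set_borel_measurable lebesgue {0..7::real} (\<lambda>u. (if u \<le> 2 then X else if u \<le> 5 then Y else (Z::real)))"
proof -
  have "(\<lambda>u::real. indicator {0..7} u *\<^sub>R (if u \<le> 2 then X else if u \<le> 5 then Y else (Z::real))) \<in> borel_measurable borel"
    by measurable
  then have "(\<lambda>u::real. indicator {0..7} u *\<^sub>R (if u \<le> 2 then X else if u \<le> 5 then Y else (Z::real))) \<in> borel_measurable lborel"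
    by simp
  then show ?thesis unfolding set_borel_measurable_def by (rule measurable_completion)
qed

lemma flow_three_groups:
  "flow {0..7} (\<lambda>u. if u \<le> 2 then P1 else if u \<le> 5 then P2 else P3) a =
    (if a \<in> set P1 then 2 else 0) + (if a \<in> set P2 then 3 else 0) + (if a \<in> set P3 then 2 else 0)"
proof -
  define X where "X = (if a \<in> set P1 then {0..2} else ({}::real set))"
  define Y where "Y = (if a \<in> set P2 then {2<..5} else ({}::real set))"
  define Z where "Z = (if a \<in> set P3 then {5<..7} else ({}::real set))"
  have eq: "{u\<in>{0..7}. a \<in> set (if u \<le> 2 then P1 else if u \<le> 5 then P2 else P3)} = X \<union> Y \<union> Z"
    unfolding X_def Y_def Z_def by auto
  have bX: "X \<in> sets borel" "Y \<in> sets borel" "Z \<in> sets borel" unfolding X_def Y_def Z_def by auto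
  have fm: "cbox 0 (7::real) \<in> fmeasurable lborel" by (rule fmeasurable_cbox)
  have sub: "X \<subseteq> cbox 0 7" "Y \<subseteq> cbox 0 7" "Z \<subseteq> cbox 0 7" unfolding X_def Y_def Z_def by auto
  have fX: "X \<in> fmeasurable lborel" "Y \<in> fmeasurable lborel" "Z \<in> fmeasurable lborel"
    using fmeasurableI2[OF fm sub(1)] fmeasurableI2[OF fm sub(2)] fmeasurableI2[OF fm sub(3)] bX by auto
  have i1: "X \<inter> Y = {}" "(X \<union> Y) \<inter> Z = {}" unfolding X_def Y_def Z_def by auto
  have "measure lborel (X \<union> Y \<union> Z) = measure lborel X + measure lborel Y + measure lborel Z"
    using measure_Un3[OF fX(1) fX(2)] measure_Un3[OF fmeasurable.Un[OF fX(1) fX(2)] fX(3)] i1 by simp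
  moreover have "measure lborel X = (if a \<in> set P1 then 2 else 0)" unfolding X_def by simp
  moreover have "measure lborel Y = (if a \<in> set P2 then 3 else 0)" unfolding Y_def by simp
  moreover have "measure lborel Z = (if a \<in> set P3 then 2 else 0)" unfolding Z_def by simp
  moreover have "measure lebesgue (X \<union> Y \<union> Z) = measure lborel (X \<union> Y \<union> Z)"
    using bX by simp
  ultimately show ?thesis unfolding flow_def eq by simp
qed




lemma route_from_vertices:
  assumes ne: "P \<noteq> []" and E: "\<forall>a\<in>set P. fst a \<in> E"
    and tl: "\<And>l. l < length P \<Longrightarrow> arc_tail ends (P!l) = g l"
    and hd: "\<And>l. l < length P \<Longrightarrow> arc_head ends (P!l) = g (Suc l)"
    and inj: "inj_on g {0..length P}"
  shows "is_route E ends (g 0) (g (length P)) P"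
proof -
  have "arc_tail ends (hd P) = g 0" using ne tl by (simp add: hd_conv_nth)
  moreover have "arc_head ends (last P) = g (length P)"
    using ne hd[of "length P - 1"] by (simp add: last_conv_nth)
  moreover have "\<forall>i. Suc i < length P \<longrightarrow> arc_head ends (P ! i) = arc_tail ends (P ! Suc i)"
    using tl hd by simp
  moreover have "map (arc_tail ends) P @ [g (length P)] = map g [0..<Suc (length P)]"
    by (rule nth_equalityI) (auto simp: nth_append tl)
  moreover have "distinct (map g [0..<Suc (length P)])"
  proof -
    have e: "set [0..<Suc (length P)] = {0..length P}" by auto
    have "inj_on g (set [0..<Suc (length P)])" using inj by (simp only: e)
    then show ?thesis by (simp only: distinct_map distinct_upt)
  qed
  ultimately show ?thesis using ne E unfolding is_route_def by simp
qed

lemma route_cost_potential_bound: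
  fixes potential :: "'v \<Rightarrow> real"
  assumes P: "is_route E ends s t P"
    and w: "\<And>a. fst a \<in> E \<Longrightarrow> w a \<ge> potential (arc_head ends a) - potential (arc_tail ends a)"
  shows "sum_list (map w P) \<ge> potential t - potential s"
proof -
  define W where "W = route_vertices ends P t"
  have "sum_list (map w P) = (\<Sum>l<length P. w (P!l))"
    by (simp add: sum_list_sum_nth atLeast0LessThan)
  also have "\<dots> \<ge> (\<Sum>l<length P. potential (W!Suc l) - potential (W!l))"
  proof (rule sum_mono)
    fix l assume "l \<in> {..<length P}"
    then have l: "l < length P" by simp
    have "fst (P!l) \<in> E" using P l unfolding is_route_def by auto
    then show "potential (W!Suc l) - potential (W!l) \<le> w (P!l)"
      using w route_vertices_arc[OF P l] W_def by metis
  qed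
  moreover have "(\<Sum>l<length P. potential (W!Suc l) - potential (W!l)) = potential (W!length P) - potential (W!0)"
    by (rule sum_lessThan_telescope)
  moreover have "W!length P = t" "W!0 = s" using route_vertices_basic[OF P] W_def by auto
  ultimately show ?thesis by simp
qed

lemma add_mod_cancel: "((b::nat) + x) mod k = (b + y) mod k \<Longrightarrow> x mod k = y mod k"
  by (simp add: nat_mod_eq_iff)

lemma sum_list_const_on: "(\<And>x. x \<in> set xs \<Longrightarrow> f x = (K::real)) \<Longrightarrow> sum_list (map f xs) = real (length xs) * K"
  by (induction xs) (auto simp: algebra_simps)

lemma linear_quadratic_strict_mono:
  fixes w q :: real
  assumes "0 \<le> w" "0 \<le> q" "0 < w + q"
  shows "strict_mono_on {0..} (\<lambda>x. w * x + q * x^2)"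
proof (rule strict_mono_onI)
  fix x y :: real assume x: "x \<in> {0..}" and y: "y \<in> {0..}" and xy: "x < y"
  have "x^2 \<le> y^2" using x xy by (simp add: power_mono)
  have "x^2 < y^2" using x xy by (simp add: power_strict_mono)
  show "w * x + q * x^2 < w * y + q * y^2"
  proof (cases "w > 0")
    case True
    then have "w * x < w * y" using xy by simp
    moreover have "q * x^2 \<le> q * y^2" using assms \<open>x^2 \<le> y^2\<close> by (simp add: mult_left_mono)
    ultimately show ?thesis by simp
  next
    case False
    then have "w = 0" "q > 0" using assms by auto
    then show ?thesis using \<open>x^2 < y^2\<close> by simp
  qed
qed

lemma diff_affine_step: "(m::real) \<noteq> 0 \<Longrightarrow> (x + (a - 1) / m * D) - (x + a / m * D) = (- D) / m"
  by (simp add: field_simps)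

lemma diff_affine_last: "(m::real) \<noteq> 0 \<Longrightarrow> x - (x + 1 / m * (y - x)) = (x - y) / m"
  by (simp add: field_simps)

section \<open>A long cycle destroys strong uniqueness\<close>

text \<open>A cycle v_0, ..., v_{k-1} (k >= 3) with chosen edges ed i joining v_i and v_{i+1}.
  Vertex and arc indices are taken modulo k: fwd i is the arc v_i -> v_{i+1} of ed i,
  bwd i its reverse.\<close>

locale long_cycle =
  fixes V :: "'v set" and E :: "'e set" and ends :: "'e \<Rightarrow> 'v \<times> 'v" and vs :: "'v list"
    and ed :: "nat \<Rightarrow> 'e"
  assumes distinct_vs: "distinct vs" and k_ge_3: "3 \<le> length vs"
    and vs_in_V: "set vs \<subseteq> V"
    and ed_in_E: "\<And>i. i < length vs \<Longrightarrow> ed i \<in> E"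
    and ed_ends: "\<And>i. i < length vs \<Longrightarrow>
        {fst (ends (ed i)), snd (ends (ed i))} = {vs!i, vs!((i+1) mod length vs)}"
begin

abbreviation "k \<equiv> length vs"

definition v :: "nat \<Rightarrow> 'v" where "v i = vs ! (i mod k)"

definition fwd :: "nat \<Rightarrow> 'e \<times> bool" where
  "fwd i = (ed (i mod k), fst (ends (ed (i mod k))) = v i)"

definition bwd :: "nat \<Rightarrow> 'e \<times> bool" where
  "bwd i = (ed (i mod k), fst (ends (ed (i mod k))) \<noteq> v i)"

lemma k_pos: "0 < k" using k_ge_3 by linarith

lemma one_mod[simp]: "1 mod k = 1" and two_mod[simp]: "2 mod k = 2" using k_ge_3 by auto

lemma v_mod[simp]: "v (i mod k) = v i" unfolding v_def by simp

lemma v_add_k[simp]: "v (i + k) = v i" unfolding v_def by simp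

lemma v_eq: "v i = v j \<longleftrightarrow> i mod k = j mod k"
  unfolding v_def using distinct_vs k_pos by (simp add: nth_eq_iff_index_eq)

lemma v_in: "v i \<in> set vs" unfolding v_def using k_pos by simp

lemma mod_inj_small:
  assumes "(b + x) mod k = (b + y) mod k" "x < k" "y < k" shows "x = y"
proof -
  have "x mod k = y mod k" using assms(1) by (rule add_mod_cancel)
  then show ?thesis using assms by simp
qed

lemma ed_ends_mod: "{fst (ends (ed (i mod k))), snd (ends (ed (i mod k)))} = {v i, v (Suc i)}"
proof -
  have "{fst (ends (ed (i mod k))), snd (ends (ed (i mod k)))} = {vs!(i mod k), vs!((i mod k + 1) mod k)}"
    using ed_ends[of "i mod k"] k_pos by simp
  moreover have "(i mod k + 1) mod k = Suc i mod k" by (simp add: mod_Suc_eq)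
  ultimately show ?thesis unfolding v_def by simp
qed

lemma v_Suc_ne: "v i \<noteq> v (Suc i)"
proof
  assume "v i = v (Suc i)"
  then have "i mod k = Suc i mod k" using v_eq by simp
  then have "(i + 0) mod k = (i + 1) mod k" by simp
  then have "0 mod k = 1 mod k" by (rule add_mod_cancel)
  then show False using k_ge_3 by simp
qed

lemma fwd_in_E: "fst (fwd i) \<in> E" and bwd_in_E: "fst (bwd i) \<in> E"
  unfolding fwd_def bwd_def using ed_in_E k_pos by auto

lemma fwd_tail: "arc_tail ends (fwd i) = v i" and fwd_head: "arc_head ends (fwd i) = v (Suc i)"
  and bwd_tail: "arc_tail ends (bwd i) = v (Suc i)" and bwd_head: "arc_head ends (bwd i) = v i"
  using ed_ends_mod[of i] v_Suc_ne[of i]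
  unfolding fwd_def bwd_def arc_tail_def arc_head_def by (auto simp: doubleton_eq_iff)

text \<open>Distinct cycle positions carry distinct edges (here k >= 3 is needed).\<close>

lemma ed_inj: "ed (i mod k) = ed (j mod k) \<Longrightarrow> i mod k = j mod k"
proof -
  assume h: "ed (i mod k) = ed (j mod k)"
  then have "{v i, v (Suc i)} = {v j, v (Suc j)}" using ed_ends_mod by metis
  then consider "v i = v j" | "v i = v (Suc j) \<and> v (Suc i) = v j" by (auto simp: doubleton_eq_iff)
  then show ?thesis
  proof cases
    case 1 then show ?thesis using v_eq by simp
  next
    case 2
    then have "i mod k = Suc j mod k" "Suc i mod k = j mod k" using v_eq by auto
    then have "Suc (Suc j) mod k = j mod k" by (metis mod_Suc_eq)
    then have "(j + 2) mod k = (j + 0) mod k" by simp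
    then have "2 mod k = 0 mod k" by (rule add_mod_cancel)
    then show ?thesis using k_ge_3 by simp
  qed
qed

lemma fwd_eq: "fwd i = fwd j \<longleftrightarrow> i mod k = j mod k"
proof
  assume "fwd i = fwd j" then show "i mod k = j mod k" using ed_inj unfolding fwd_def by simp
next
  assume h: "i mod k = j mod k"
  then have "v i = v j" using v_eq by simp
  then show "fwd i = fwd j" unfolding fwd_def using h by simp
qed

lemma bwd_eq: "bwd i = bwd j \<longleftrightarrow> i mod k = j mod k"
proof
  assume "bwd i = bwd j" then show "i mod k = j mod k" using ed_inj unfolding bwd_def by simp
next
  assume h: "i mod k = j mod k"
  then have "v i = v j" using v_eq by simp
  then show "bwd i = bwd j" unfolding bwd_def using h by simp
qed

lemma fwd_ne_bwd: "fwd i \<noteq> bwd j"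
proof
  assume h: "fwd i = bwd j"
  then have "i mod k = j mod k" using ed_inj unfolding fwd_def bwd_def by simp
  then have "v i = v j" using v_eq by simp
  then show False using h unfolding fwd_def bwd_def by auto
qed

definition fwd_walk :: "nat \<Rightarrow> nat \<Rightarrow> ('e \<times> bool) list" where
  "fwd_walk i n = map (\<lambda>j. fwd (i + j)) [0..<n]"

definition bwd_walk :: "nat \<Rightarrow> nat \<Rightarrow> ('e \<times> bool) list" where
  "bwd_walk i n = map (\<lambda>j. bwd (i + k - 1 - j)) [0..<n]"

lemma set_fwd_walk: "set (fwd_walk i n) = {fwd (i+j) | j. j < n}" unfolding fwd_walk_def by auto

lemma set_bwd_walk: "set (bwd_walk i n) = {bwd (i+k-1-j) | j. j < n}" unfolding bwd_walk_def by auto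

lemma fwd_in_fwd_walk: "p < k \<Longrightarrow> fwd p \<in> set (fwd_walk i n) \<longleftrightarrow> (\<exists>j<n. p = (i+j) mod k)"
  unfolding set_fwd_walk using fwd_eq by auto

lemma bwd_in_bwd_walk: "p < k \<Longrightarrow> bwd p \<in> set (bwd_walk i n) \<longleftrightarrow> (\<exists>j<n. p = (i+k-1-j) mod k)"
  unfolding set_bwd_walk using bwd_eq by auto

lemma fwd_notin_bwd_walk: "fwd p \<notin> set (bwd_walk i n)" unfolding set_bwd_walk using fwd_ne_bwd by auto

lemma bwd_notin_fwd_walk: "bwd p \<notin> set (fwd_walk i n)" unfolding set_fwd_walk using fwd_ne_bwd[THEN not_sym] by auto

lemma fwd_walk_route:
  assumes "0 < n" "n < k"
  shows "is_route E ends (v i) (v (i + n)) (fwd_walk i n)"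
proof -
  have "is_route E ends ((\<lambda>j. v (i + j)) 0) ((\<lambda>j. v (i + j)) (length (fwd_walk i n))) (fwd_walk i n)"
  proof (rule route_from_vertices)
    show "fwd_walk i n \<noteq> []" using assms unfolding fwd_walk_def by simp
    show "\<forall>a\<in>set (fwd_walk i n). fst a \<in> E" using fwd_in_E unfolding fwd_walk_def by auto
    show "arc_tail ends (fwd_walk i n ! l) = v (i + l)" if "l < length (fwd_walk i n)" for l
      using that fwd_tail unfolding fwd_walk_def by simp
    show "arc_head ends (fwd_walk i n ! l) = v (i + Suc l)" if "l < length (fwd_walk i n)" for l
      using that fwd_head unfolding fwd_walk_def by simp
    show "inj_on (\<lambda>j. v (i + j)) {0..length (fwd_walk i n)}"
    proof (rule inj_onI)
      fix x y assume x: "x \<in> {0..length (fwd_walk i n)}" and y: "y \<in> {0..length (fwd_walk i n)}"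
        and e: "v (i + x) = v (i + y)"
      have "(i + x) mod k = (i + y) mod k" using e by (simp only: v_eq)
      moreover have "x < k" "y < k" using x y assms unfolding fwd_walk_def by auto
      ultimately show "x = y" by (rule mod_inj_small)
    qed
  qed
  then show ?thesis unfolding fwd_walk_def by simp
qed

lemma bwd_walk_route:
  assumes "0 < n" "n < k"
  shows "is_route E ends (v i) (v (i + k - n)) (bwd_walk i n)"
proof -
  have "is_route E ends ((\<lambda>j. v (i + k - j)) 0) ((\<lambda>j. v (i + k - j)) (length (bwd_walk i n))) (bwd_walk i n)"
  proof (rule route_from_vertices)
    show "bwd_walk i n \<noteq> []" using assms unfolding bwd_walk_def by simp
    show "\<forall>a\<in>set (bwd_walk i n). fst a \<in> E" using bwd_in_E unfolding bwd_walk_def by auto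
    show "arc_tail ends (bwd_walk i n ! l) = v (i + k - l)" if "l < length (bwd_walk i n)" for l
    proof -
      have "Suc (i + k - 1 - l) = i + k - l" using that assms unfolding bwd_walk_def by simp
      then show ?thesis using that bwd_tail unfolding bwd_walk_def by simp
    qed
    show "arc_head ends (bwd_walk i n ! l) = v (i + k - Suc l)" if "l < length (bwd_walk i n)" for l
      using that bwd_head unfolding bwd_walk_def by simp
    show "inj_on (\<lambda>j. v (i + k - j)) {0..length (bwd_walk i n)}"
    proof (rule inj_onI)
      fix x y assume x: "x \<in> {0..length (bwd_walk i n)}" and y: "y \<in> {0..length (bwd_walk i n)}"
        and e: "v (i + k - x) = v (i + k - y)"
      have "i + k - x = (i + k - n) + (n - x) \<and> i + k - y = (i + k - n) + (n - y)"
        using x y assms unfolding bwd_walk_def by auto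
      moreover have "(i + k - x) mod k = (i + k - y) mod k" using e by (simp only: v_eq)
      ultimately have "(i + k - n + (n - x)) mod k = (i + k - n + (n - y)) mod k" by simp
      moreover have "n - x < k" "n - y < k" using assms by auto
      ultimately have "n - x = n - y" by (rule mod_inj_small)
      then show "x = y" using x y unfolding bwd_walk_def by simp
    qed
  qed
  then show ?thesis unfolding bwd_walk_def by simp
qed

text \<open>Group 0 (users in {0..2}) travels v_0 -> v_2, group 1 (users in (2..5]) travels
  v_0 -> v_1 and group 2 (users in (5..7]) travels v_2 -> v_1.  Each group has two routes on the
  cycle: the profile sigma1 uses A1 = v_0 v_1 v_2, B1 = v_0 v_{k-1} ... v_2 v_1 and
  C1 = v_2 v_3 ... v_{k-1} v_0 v_1; the profile sigma2 uses the other ways round the cycle,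
  A2 = v_0 v_{k-1} ... v_2, B2 = v_0 v_1 and C2 = v_2 v_1.\<close>

definition "A1 = fwd_walk 0 2"

definition "A2 = bwd_walk 0 (k-2)"

definition "B1 = bwd_walk 0 (k-1)"

definition "B2 = fwd_walk 0 1"

definition "C1 = fwd_walk 2 (k-1)"

definition "C2 = bwd_walk 2 1"

lemma A1_eq: "A1 = [fwd 0, fwd 1]" unfolding A1_def fwd_walk_def by (simp add: upt_rec)

lemma B2_eq: "B2 = [fwd 0]" unfolding B2_def fwd_walk_def by simp

lemma C2_eq: "C2 = [bwd 1]"
proof -
  have e: "2 + k - 1 - 0 = 1 + k" by simp
  have "(1 + k) mod k = 1 mod k" by (simp only: mod_add_self2)
  then have "bwd (2 + k - 1 - 0) = bwd 1" unfolding e using bwd_eq by blast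
  then show ?thesis unfolding C2_def bwd_walk_def by simp
qed

lemma B1_eq: "B1 = bwd_walk 0 (k-2) @ [bwd 1]"
proof -
  have "k - 1 = Suc (k - 2)" using k_ge_3 by simp
  moreover have "0 + k - 1 - (k - 2) = 1" using k_ge_3 by simp
  ultimately show ?thesis unfolding B1_def bwd_walk_def by simp
qed

lemma C1_eq: "C1 = fwd_walk 2 (k-2) @ [fwd 0]"
proof -
  have "k - 1 = Suc (k - 2)" using k_ge_3 by simp
  moreover have "fwd (2 + (k - 2)) = fwd 0"
  proof -
    have "2 + (k - 2) = k" using k_ge_3 by simp
    then show ?thesis using fwd_eq by simp
  qed
  ultimately show ?thesis unfolding C1_def fwd_walk_def by simp
qed

lemma v_wrap_1: "v (2 + (k - 1)) = v 1" "v (2 + k - 1) = v 1"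
proof -
  have "2 + (k - 1) = 1 + k" "2 + k - 1 = 1 + k" using k_ge_3 by auto
  moreover have "v (1 + k) = v 1" by (rule v_add_k)
  ultimately show "v (2 + (k - 1)) = v 1" "v (2 + k - 1) = v 1" by metis+
qed

lemma route_A1: "is_route E ends (v 0) (v 2) A1"
proof -
  have "is_route E ends (v 0) (v (0+2)) (fwd_walk 0 2)" by (rule fwd_walk_route) (use k_ge_3 in auto)
  then show ?thesis unfolding A1_def by (simp only: add_0_left)
qed

lemma route_A2: "is_route E ends (v 0) (v 2) A2"
proof -
  have "0 + k - (k - 2) = 2" using k_ge_3 by simp
  then show ?thesis unfolding A2_def using bwd_walk_route[of "k-2" 0] k_ge_3 by simp
qed

lemma route_B1: "is_route E ends (v 0) (v 1) B1"
proof -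
  have "0 + k - (k - 1) = 1" using k_ge_3 by simp
  then show ?thesis unfolding B1_def using bwd_walk_route[of "k-1" 0] k_ge_3 by simp
qed

lemma route_B2: "is_route E ends (v 0) (v 1) B2"
proof -
  have "is_route E ends (v 0) (v (0+1)) (fwd_walk 0 1)" by (rule fwd_walk_route) (use k_ge_3 in auto)
  then show ?thesis unfolding B2_def by (simp only: add_0_left)
qed

lemma route_C1: "is_route E ends (v 2) (v 1) C1"
  unfolding C1_def using fwd_walk_route[of "k-1" 2] k_ge_3 v_wrap_1 by simp

lemma route_C2: "is_route E ends (v 2) (v 1) C2"
  unfolding C2_def using bwd_walk_route[of 1 2] k_ge_3 v_wrap_1 by simp

lemma fwd_in_A1: assumes p: "p < k" shows "fwd p \<in> set A1 \<longleftrightarrow> p \<le> 1"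
proof -
  have jm: "j < 2 \<Longrightarrow> j mod k = j" for j using k_ge_3 by simp
  have "(\<exists>j<2. p = (0+j) mod k) \<longleftrightarrow> p \<le> 1"
  proof
    assume "\<exists>j<2. p = (0+j) mod k"
    then obtain j where "j < 2" "p = j mod k" by auto
    then show "p \<le> 1" using jm by simp
  next
    assume "p \<le> 1"
    then show "\<exists>j<2. p = (0+j) mod k" using jm[of p] by (intro exI[of _ p]) auto
  qed
  then show ?thesis unfolding A1_def fwd_in_fwd_walk[OF p] .
qed

lemma fwd_in_B2: "p < k \<Longrightarrow> fwd p \<in> set B2 \<longleftrightarrow> p = 0"
  unfolding B2_def fwd_in_fwd_walk by auto

lemma fwd_in_C1: assumes p: "p < k" shows "fwd p \<in> set C1 \<longleftrightarrow> p \<noteq> 1"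
proof -
  have "(\<exists>j<k-1. p = (2+j) mod k) \<longleftrightarrow> p \<noteq> 1"
  proof
    assume "\<exists>j<k-1. p = (2+j) mod k"
    then obtain j where j: "j < k-1" "p = (2+j) mod k" by blast
    show "p \<noteq> 1"
    proof (cases "2 + j < k")
      case True then show ?thesis using j by simp
    next
      case False then have "2 + j = k" using j by simp
      then show ?thesis using j by simp
    qed
  next
    assume h: "p \<noteq> 1"
    show "\<exists>j<k-1. p = (2+j) mod k"
    proof (cases "p = 0")
      case True
      have "2 + (k-2) = k" using k_ge_3 by simp
      then have "(2 + (k-2)) mod k = 0" by simp
      then show ?thesis using True k_ge_3 by (intro exI[of _ "k-2"]) auto
    next
      case False
      then have "2 \<le> p" using h by simp
      then show ?thesis using p by (intro exI[of _ "p-2"]) auto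
    qed
  qed
  then show ?thesis unfolding C1_def fwd_in_fwd_walk[OF p] .
qed

lemma bwd_in_A2: assumes p: "p < k" shows "bwd p \<in> set A2 \<longleftrightarrow> 2 \<le> p"
proof -
  have "(\<exists>j<k-2. p = (0+k-1-j) mod k) \<longleftrightarrow> 2 \<le> p"
  proof
    assume "\<exists>j<k-2. p = (0+k-1-j) mod k"
    then obtain j where j: "j < k-2" "p = (k-1-j) mod k" by auto
    then have "p = k-1-j" using k_ge_3 by simp
    then show "2 \<le> p" using j by simp
  next
    assume h: "2 \<le> p"
    have "(0 + k - 1 - (k-1-p)) mod k = p" using p by simp
    then show "\<exists>j<k-2. p = (0+k-1-j) mod k" using h p by (intro exI[of _ "k-1-p"]) auto
  qed
  then show ?thesis unfolding A2_def bwd_in_bwd_walk[OF p] .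
qed

lemma bwd_in_B1: assumes p: "p < k" shows "bwd p \<in> set B1 \<longleftrightarrow> 1 \<le> p"
proof -
  have "(\<exists>j<k-1. p = (0+k-1-j) mod k) \<longleftrightarrow> 1 \<le> p"
  proof
    assume "\<exists>j<k-1. p = (0+k-1-j) mod k"
    then obtain j where j: "j < k-1" "p = (k-1-j) mod k" by auto
    then have "p = k-1-j" using k_ge_3 by simp
    then show "1 \<le> p" using j by simp
  next
    assume h: "1 \<le> p"
    have "(0 + k - 1 - (k-1-p)) mod k = p" using p by simp
    then show "\<exists>j<k-1. p = (0+k-1-j) mod k" using h p by (intro exI[of _ "k-1-p"]) auto
  qed
  then show ?thesis unfolding B1_def bwd_in_bwd_walk[OF p] .
qed

lemma bwd_in_C2: assumes p: "p < k" shows "bwd p \<in> set C2 \<longleftrightarrow> p = 1"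
proof -
  have "2 + k - 1 - 0 = 1 + k" by simp
  moreover have "(1 + k) mod k = 1" by (simp only: mod_add_self2 one_mod)
  ultimately have "(2 + k - 1 - 0) mod k = 1" by metis
  then have "(\<exists>j<1. p = (2+k-1-j) mod k) \<longleftrightarrow> p = 1" by auto
  then show ?thesis unfolding C2_def bwd_in_bwd_walk[OF p] .
qed

lemma routes_on_cycle: "set A1 \<union> set A2 \<union> set B1 \<union> set B2 \<union> set C1 \<union> set C2 \<subseteq> range fwd \<union> range bwd"
  unfolding A1_def A2_def B1_def B2_def C1_def C2_def set_fwd_walk set_bwd_walk by auto

definition sigma1 :: "real \<Rightarrow> ('e \<times> bool) list" where
  "sigma1 u = (if u \<le> 2 then A1 else if u \<le> 5 then B1 else C1)"

definition sigma2 :: "real \<Rightarrow> ('e \<times> bool) list" where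
  "sigma2 u = (if u \<le> 2 then A2 else if u \<le> 5 then B2 else C2)"

definition od_pairs :: "real \<Rightarrow> 'v \<times> 'v" where
  "od_pairs u = (if u \<le> 2 then (v 0, v 2) else if u \<le> 5 then (v 0, v 1) else (v 2, v 1))"

lemma profile_sigma1: "strategy_profile E ends {0..7} od_pairs sigma1"
  unfolding strategy_profile_def
proof (intro conjI allI ballI)
  fix u assume "u \<in> {0..7::real}"
  show "is_route E ends (fst (od_pairs u)) (snd (od_pairs u)) (sigma1 u)"
    unfolding od_pairs_def sigma1_def using route_A1 route_B1 route_C1 by auto
next
  fix P show "{u \<in> {0..7}. sigma1 u = P} \<in> sets lebesgue" unfolding sigma1_def by (rule three_groups_sets)
qed

lemma profile_sigma2: "strategy_profile E ends {0..7} od_pairs sigma2"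
  unfolding strategy_profile_def
proof (intro conjI allI ballI)
  fix u assume "u \<in> {0..7::real}"
  show "is_route E ends (fst (od_pairs u)) (snd (od_pairs u)) (sigma2 u)"
    unfolding od_pairs_def sigma2_def using route_A2 route_B2 route_C2 by auto
next
  fix P show "{u \<in> {0..7}. sigma2 u = P} \<in> sets lebesgue" unfolding sigma2_def by (rule three_groups_sets)
qed

lemma flow1_fwd: "p < k \<Longrightarrow> flow {0..7} sigma1 (fwd p) = (if p = 0 then 4 else 2)"
  unfolding sigma1_def flow_three_groups using fwd_in_A1 fwd_in_C1 fwd_notin_bwd_walk[of p] unfolding B1_def by auto

lemma flow1_bwd: "p < k \<Longrightarrow> flow {0..7} sigma1 (bwd p) = (if p = 0 then 0 else 3)"
  unfolding sigma1_def flow_three_groups using bwd_in_B1 bwd_notin_fwd_walk[of p] unfolding A1_def C1_def by auto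

lemma flow2_fwd: "p < k \<Longrightarrow> flow {0..7} sigma2 (fwd p) = (if p = 0 then 3 else 0)"
  unfolding sigma2_def flow_three_groups using fwd_in_B2 fwd_notin_bwd_walk[of p] unfolding A2_def C2_def by auto

lemma flow2_bwd: "p < k \<Longrightarrow> flow {0..7} sigma2 (bwd p) = (if p = 0 then 0 else 2)"
  unfolding sigma2_def flow_three_groups using bwd_in_A2 bwd_in_C2 bwd_notin_fwd_walk[of p] unfolding B2_def by auto

lemma flow1_other: "a \<notin> range fwd \<Longrightarrow> a \<notin> range bwd \<Longrightarrow> flow {0..7} sigma1 a = 0"
  unfolding sigma1_def flow_three_groups using routes_on_cycle by auto

lemma flow2_other: "a \<notin> range fwd \<Longrightarrow> a \<notin> range bwd \<Longrightarrow> flow {0..7} sigma2 a = 0"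
  unfolding sigma2_def flow_three_groups using routes_on_cycle by auto

text \<open>Arcs are classified into v_0 -> v_1 (class 0), v_1 -> v_2 (1), the other forward cycle
  arcs (2), their reverses (3, 4, 5) and all remaining arcs (6).  The cost of an arc depends
  only on its class and the user's group; the k-2 arcs of classes 2 and 5 share a total slope.
  Arcs off the cycle cost at least 100, more than any potential difference used below.\<close>

definition arc_class :: "'e \<times> bool \<Rightarrow> nat" where
  "arc_class a = (if a = fwd 0 then 0 else if a = fwd 1 then 1 else if a \<in> range fwd then 2
     else if a = bwd 0 then 3 else if a = bwd 1 then 4 else if a \<in> range bwd then 5 else 6)"

lemma arc_class_fwd: "p < k \<Longrightarrow> arc_class (fwd p) = (if p = 0 then 0 else if p = 1 then 1 else 2)"
  unfolding arc_class_def using fwd_eq fwd_ne_bwd by auto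

lemma arc_class_bwd: "p < k \<Longrightarrow> arc_class (bwd p) = (if p = 0 then 3 else if p = 1 then 4 else 5)"
  unfolding arc_class_def using bwd_eq fwd_ne_bwd[THEN not_sym] by auto

lemma arc_class_other: "a \<notin> range fwd \<Longrightarrow> a \<notin> range bwd \<Longrightarrow> arc_class a = 6"
  unfolding arc_class_def by auto

lemma arc_class_le: "arc_class a \<le> 6" unfolding arc_class_def by auto

definition slope :: "nat \<Rightarrow> nat \<Rightarrow> real" where
  "slope g cl = (if g = 0 then [6,1,1,1,1,9] ! cl else if g = 1 then [0,1,1,1,4,5] ! cl
     else [6,1,1,1,9,1] ! cl)"

definition quad :: "nat \<Rightarrow> nat \<Rightarrow> real" where
  "quad g cl = (if g = 1 \<and> cl = 0 then 2 else 0)"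

definition class_cost :: "nat \<Rightarrow> nat \<Rightarrow> real \<Rightarrow> real" where
  "class_cost g cl x = (if cl = 6 then 100 + x else if cl = 2 \<or> cl = 5 then slope g cl * x / (real k - 2)
     else slope g cl * x + quad g cl * x^2)"

definition group :: "real \<Rightarrow> nat" where
  "group u = (if u \<le> 2 then 0 else if u \<le> 5 then 1 else 2)"

definition costs :: "real \<Rightarrow> 'e \<times> bool \<Rightarrow> real \<Rightarrow> real" where
  "costs u a x = class_cost (group u) (arc_class a) x"

definition arc_cost :: "nat \<Rightarrow> (real \<Rightarrow> ('e \<times> bool) list) \<Rightarrow> 'e \<times> bool \<Rightarrow> real" where
  "arc_cost g \<sigma> a = class_cost g (arc_class a) (flow {0..7} \<sigma> a)"

lemma k_minus_2_pos: "real k - 2 > 0" using k_ge_3 by simp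

lemma slope_quad_pos: "g \<le> 2 \<Longrightarrow> cl \<le> 5 \<Longrightarrow> 0 \<le> slope g cl \<and> 0 \<le> quad g cl \<and> 0 < slope g cl + quad g cl"
proof -
  assume "g \<le> 2" "cl \<le> 5"
  then have "g \<in> {0,1,2}" "cl \<in> {0,1,2,3,4,5}" by auto
  then show ?thesis unfolding slope_def quad_def by auto
qed

lemma class_cost_strict_mono: "g \<le> 2 \<Longrightarrow> cl \<le> 6 \<Longrightarrow> strict_mono_on {0..} (class_cost g cl)"
proof -
  assume g: "g \<le> 2" and cl: "cl \<le> 6"
  show ?thesis
  proof (cases "cl = 6")
    case True
    then show ?thesis unfolding class_cost_def by (auto intro: strict_mono_onI)
  next
    case False
    then have cl5: "cl \<le> 5" using cl by simp
    show ?thesis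
    proof (cases "cl = 2 \<or> cl = 5")
      case True
      have "slope g cl > 0" using slope_quad_pos[OF g cl5] True unfolding quad_def by auto
      then show ?thesis using True k_minus_2_pos unfolding class_cost_def
        by (auto intro!: strict_mono_onI divide_strict_right_mono)
    next
      case F2: False
      have "strict_mono_on {0..} (\<lambda>x. slope g cl * x + quad g cl * x^2)"
        using slope_quad_pos[OF g cl5] by (intro linear_quadratic_strict_mono) auto
      then show ?thesis using F2 False unfolding class_cost_def by simp
    qed
  qed
qed

lemma class_cost_nonneg: "g \<le> 2 \<Longrightarrow> cl \<le> 6 \<Longrightarrow> 0 \<le> x \<Longrightarrow> 0 \<le> class_cost g cl x"
proof -
  assume g: "g \<le> 2" and cl: "cl \<le> 6" and x: "0 \<le> x"
  show ?thesis
  proof (cases "cl = 6")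
    case False
    then have cl5: "cl \<le> 5" using cl by simp
    then show ?thesis using slope_quad_pos[OF g cl5] x k_minus_2_pos unfolding class_cost_def by auto
  qed (use x in \<open>simp add: class_cost_def\<close>)
qed

lemma class_cost_continuous: "continuous_on {0..} (class_cost g cl)"
  unfolding class_cost_def using k_minus_2_pos
  by (cases "cl = 6"; cases "cl = 2 \<or> cl = 5") (auto intro!: continuous_intros)

lemma group_le: "group u \<le> 2" unfolding group_def by auto

lemma valid_costs_costs: "valid_costs E {0..7} costs"
proof -
  have 1: "continuous_on {0..} (costs u a) \<and> strict_mono_on {0..} (costs u a) \<and> (\<forall>x\<ge>0. 0 \<le> costs u a x)"
    for u a
    unfolding costs_def using class_cost_continuous class_cost_strict_mono class_cost_nonneg group_le arc_class_le by simp
  have 2: "set_borel_measurable lebesgue {0..7} (\<lambda>u. costs u a x)" for a x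
  proof -
    have "(\<lambda>u. costs u a x) = (\<lambda>u. if u \<le> 2 then class_cost 0 (arc_class a) x else if u \<le> 5 then class_cost 1 (arc_class a) x
       else class_cost 2 (arc_class a) x)"
      unfolding costs_def group_def by auto
    then show ?thesis using three_groups_measurable by simp
  qed
  show ?thesis unfolding valid_costs_def using 1 2 by blast
qed

lemma class_cost_fwd: "p < k \<Longrightarrow> class_cost g (arc_class (fwd p)) x = (if p = 0 then slope g 0 * x + quad g 0 * x^2
   else if p = 1 then slope g 1 * x + quad g 1 * x^2 else slope g 2 * x / (real k - 2))"
  using arc_class_fwd[of p] unfolding class_cost_def by auto

lemma class_cost_bwd: "p < k \<Longrightarrow> class_cost g (arc_class (bwd p)) x = (if p = 0 then slope g 3 * x + quad g 3 * x^2
   else if p = 1 then slope g 4 * x + quad g 4 * x^2 else slope g 5 * x / (real k - 2))"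
  using arc_class_bwd[of p] unfolding class_cost_def by auto

lemma class_cost_other: "a \<notin> range fwd \<Longrightarrow> a \<notin> range bwd \<Longrightarrow> class_cost g (arc_class a) x = 100 + x"
  using arc_class_other unfolding class_cost_def by auto

lemma cost1_fwd: "p < k \<Longrightarrow> arc_cost g sigma1 (fwd p) =
  (if p = 0 then slope g 0 * 4 + quad g 0 * 16 else if p = 1 then slope g 1 * 2 + quad g 1 * 4
   else slope g 2 * 2 / (real k - 2))"
  unfolding arc_cost_def using class_cost_fwd flow1_fwd by simp

lemma cost1_bwd: "p < k \<Longrightarrow> arc_cost g sigma1 (bwd p) =
  (if p = 0 then 0 else if p = 1 then slope g 4 * 3 + quad g 4 * 9
   else slope g 5 * 3 / (real k - 2))"
  unfolding arc_cost_def using class_cost_bwd flow1_bwd by simp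

lemma cost2_fwd: "p < k \<Longrightarrow> arc_cost g sigma2 (fwd p) =
  (if p = 0 then slope g 0 * 3 + quad g 0 * 9 else 0)"
  unfolding arc_cost_def using class_cost_fwd flow2_fwd by simp

lemma cost2_bwd: "p < k \<Longrightarrow> arc_cost g sigma2 (bwd p) =
  (if p = 0 then 0 else if p = 1 then slope g 4 * 2 + quad g 4 * 4
   else slope g 5 * 2 / (real k - 2))"
  unfolding arc_cost_def using class_cost_bwd flow2_bwd by simp

lemma route_cost_costs: "route_cost {0..7} costs \<sigma> u Q = sum_list (map (arc_cost (group u) \<sigma>) Q)"
  unfolding route_cost_def costs_def arc_cost_def by simp

lemma sum_long_bwd_walk:
  assumes "\<And>p. 2 \<le> p \<Longrightarrow> p < k \<Longrightarrow> w (bwd p) = D / (real k - 2)"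
  shows "sum_list (map w (bwd_walk 0 (k-2))) = D"
proof -
  have "sum_list (map w (bwd_walk 0 (k-2))) = real (length (bwd_walk 0 (k-2))) * (D / (real k - 2))"
  proof (rule sum_list_const_on)
    fix x assume "x \<in> set (bwd_walk 0 (k-2))"
    then obtain j where "j < k - 2" "x = bwd (0 + k - 1 - j)" unfolding set_bwd_walk by auto
    then show "w x = D / (real k - 2)" using assms[of "0 + k - 1 - j"] by simp
  qed
  then show ?thesis using k_ge_3 k_minus_2_pos unfolding bwd_walk_def by simp
qed

lemma sum_long_fwd_walk:
  assumes "\<And>p. 2 \<le> p \<Longrightarrow> p < k \<Longrightarrow> w (fwd p) = D / (real k - 2)"
  shows "sum_list (map w (fwd_walk 2 (k-2))) = D"
proof -
  have "sum_list (map w (fwd_walk 2 (k-2))) = real (length (fwd_walk 2 (k-2))) * (D / (real k - 2))"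
  proof (rule sum_list_const_on)
    fix x assume "x \<in> set (fwd_walk 2 (k-2))"
    then obtain j where "j < k - 2" "x = fwd (2 + j)" unfolding set_fwd_walk by auto
    then show "w x = D / (real k - 2)" using assms[of "2 + j"] by simp
  qed
  then show ?thesis using k_ge_3 k_minus_2_pos unfolding fwd_walk_def by simp
qed

subsection \<open>Potentials certifying the equilibria\<close>

text \<open>The potential takes prescribed values d0, d1, d2 at v_0, v_1, v_2 and interpolates
  affinely between d2 and d0 along v_2, v_3, ..., v_{k-1}, v_0.\<close>

definition pos :: "'v \<Rightarrow> nat" where "pos x = (THE p. p < k \<and> vs ! p = x)"

definition Phi :: "real \<Rightarrow> real \<Rightarrow> real \<Rightarrow> nat \<Rightarrow> real" where
  "Phi d0 d1 d2 p = (if p = 0 then d0 else if p = 1 then d1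
     else d0 + (real k - real p) / (real k - 2) * (d2 - d0))"

definition potential :: "real \<Rightarrow> real \<Rightarrow> real \<Rightarrow> 'v \<Rightarrow> real" where
  "potential d0 d1 d2 x = (if x \<in> set vs then Phi d0 d1 d2 (pos x) else 0)"

lemma pos_nth: "p < k \<Longrightarrow> pos (vs ! p) = p"
  unfolding pos_def
proof (rule the_equality)
  fix q assume "p < k" "q < k \<and> vs ! q = vs ! p"
  then show "q = p" using distinct_vs by (metis nth_eq_iff_index_eq)
qed simp

lemma pos_lt: "x \<in> set vs \<Longrightarrow> pos x < k"
proof -
  assume "x \<in> set vs"
  then obtain p where "p < k" "vs ! p = x" by (meson in_set_conv_nth)
  then show ?thesis using pos_nth by auto
qed

lemma potential_v: "potential d0 d1 d2 (v i) = Phi d0 d1 d2 (i mod k)"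
  unfolding potential_def using v_in pos_nth k_pos unfolding v_def by simp

lemma Phi0: "Phi d0 d1 d2 0 = d0" and Phi1: "Phi d0 d1 d2 1 = d1"
  unfolding Phi_def by auto

lemma Phi2: "Phi d0 d1 d2 2 = d2"
  unfolding Phi_def using k_minus_2_pos by simp

lemma potential_v012: "potential d0 d1 d2 (v 0) = d0" "potential d0 d1 d2 (v 1) = d1" "potential d0 d1 d2 (v 2) = d2"
  by (simp_all only: potential_v one_mod two_mod Phi1 Phi2 mod_0 Phi0)

lemma Phi_step:
  assumes "2 \<le> p" "p < k"
  shows "Phi d0 d1 d2 (Suc p mod k) - Phi d0 d1 d2 p = (d0 - d2) / (real k - 2)"
proof (cases "Suc p < k")
  case True
  then have "Suc p mod k = Suc p" by simp
  moreover have "Phi d0 d1 d2 (Suc p) = d0 + ((real k - real p) - 1) / (real k - 2) * (d2 - d0)"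
    using assms unfolding Phi_def by simp
  moreover have "Phi d0 d1 d2 p = d0 + (real k - real p) / (real k - 2) * (d2 - d0)"
    using assms unfolding Phi_def by simp
  ultimately show ?thesis using diff_affine_step[of "real k - 2" d0 "real k - real p" "d2 - d0"] k_minus_2_pos
    by simp
next
  case False
  then have "Suc p = k" using assms by simp
  then have "Suc p mod k = 0" "real k - real p = 1" by auto
  moreover have "Phi d0 d1 d2 p = d0 + (real k - real p) / (real k - 2) * (d2 - d0)"
    using assms unfolding Phi_def by simp
  ultimately show ?thesis using diff_affine_last[of "real k - 2" d0 d2] k_minus_2_pos Phi0 by simp
qed

text \<open>With prescribed values in [0,27] the potential stays in [0,27]; hence arcs off the
  cycle, which cost at least 100, never violate the certificate.\<close>

lemma Phi_bounds:
  assumes d: "0 \<le> d0" "d0 \<le> 27" "0 \<le> d1" "d1 \<le> 27" "0 \<le> d2" "d2 \<le> 27" and p: "p < k"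
  shows "0 \<le> Phi d0 d1 d2 p \<and> Phi d0 d1 d2 p \<le> 27"
proof (cases "p \<le> 1")
  case True then show ?thesis using d unfolding Phi_def by auto
next
  case False
  define l where "l = (real k - real p) / (real k - 2)"
  have l0: "0 \<le> l" unfolding l_def using p k_minus_2_pos by simp
  have l1: "l \<le> 1" unfolding l_def using p k_minus_2_pos False by (simp add: divide_le_eq_1)
  have "Phi d0 d1 d2 p = d0 + l * (d2 - d0)" unfolding Phi_def l_def using False by simp
  then have e: "Phi d0 d1 d2 p = (1 - l) * d0 + l * d2" by (simp add: algebra_simps)
  have "(1 - l) * d0 \<le> (1 - l) * 27" using l1 d by (intro mult_left_mono) auto
  moreover have "l * d2 \<le> l * 27" using l0 d by (intro mult_left_mono) auto
  moreover have "0 \<le> (1 - l) * d0" "0 \<le> l * d2" using l0 l1 d by simp_all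
  ultimately show ?thesis using e by (simp add: algebra_simps)
qed

lemma potential_bounds:
  assumes "0 \<le> d0" "d0 \<le> 27" "0 \<le> d1" "d1 \<le> 27" "0 \<le> d2" "d2 \<le> 27"
  shows "0 \<le> potential d0 d1 d2 x \<and> potential d0 d1 d2 x \<le> 27"
  unfolding potential_def using Phi_bounds[OF assms pos_lt] by auto

lemma potential_below_fwd:
  assumes h01: "w (fwd 0) \<ge> d1 - d0" and h12: "w (fwd 1) \<ge> d2 - d1"
    and h20: "\<And>p. 2 \<le> p \<Longrightarrow> p < k \<Longrightarrow> w (fwd p) * (real k - 2) \<ge> d0 - d2"
  shows "w (fwd q) \<ge> potential d0 d1 d2 (arc_head ends (fwd q)) - potential d0 d1 d2 (arc_tail ends (fwd q))"
proof -
  define p where "p = q mod k"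
  have p: "p < k" unfolding p_def using k_pos by simp
  have fq: "fwd q = fwd p" using fwd_eq unfolding p_def by simp
  have hd: "potential d0 d1 d2 (arc_head ends (fwd p)) = Phi d0 d1 d2 (Suc p mod k)"
    using fwd_head potential_v by simp
  have tl: "potential d0 d1 d2 (arc_tail ends (fwd p)) = Phi d0 d1 d2 p"
    using fwd_tail potential_v p by simp
  consider "p = 0" | "p = 1" | "2 \<le> p" by linarith
  then show ?thesis
  proof cases
    case 1 then show ?thesis using fq hd tl h01 k_ge_3 Phi0 Phi1 by simp
  next
    case 2
    have "Suc p mod k = 2" using 2 k_ge_3 by simp
    then show ?thesis using fq hd tl h12 2 Phi1 Phi2 by simp
  next
    case 3
    have "w (fwd p) \<ge> (d0 - d2) / (real k - 2)" using h20[OF 3 p] k_minus_2_pos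
      by (simp add: divide_le_eq)
    then show ?thesis using fq hd tl Phi_step[OF 3 p] by simp
  qed
qed

lemma potential_below_bwd:
  assumes h10: "w (bwd 0) \<ge> d0 - d1" and h21: "w (bwd 1) \<ge> d1 - d2"
    and h02: "\<And>p. 2 \<le> p \<Longrightarrow> p < k \<Longrightarrow> w (bwd p) * (real k - 2) \<ge> d2 - d0"
  shows "w (bwd q) \<ge> potential d0 d1 d2 (arc_head ends (bwd q)) - potential d0 d1 d2 (arc_tail ends (bwd q))"
proof -
  define p where "p = q mod k"
  have p: "p < k" unfolding p_def using k_pos by simp
  have bq: "bwd q = bwd p" using bwd_eq unfolding p_def by simp
  have tl: "potential d0 d1 d2 (arc_tail ends (bwd p)) = Phi d0 d1 d2 (Suc p mod k)"
    using bwd_tail potential_v by simp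
  have hd: "potential d0 d1 d2 (arc_head ends (bwd p)) = Phi d0 d1 d2 p"
    using bwd_head potential_v p by simp
  consider "p = 0" | "p = 1" | "2 \<le> p" by linarith
  then show ?thesis
  proof cases
    case 1 then show ?thesis using bq hd tl h10 k_ge_3 Phi0 Phi1 by simp
  next
    case 2
    have "Suc p mod k = 2" using 2 k_ge_3 by simp
    then show ?thesis using bq hd tl h21 2 Phi1 Phi2 by simp
  next
    case 3
    have "w (bwd p) \<ge> (d2 - d0) / (real k - 2)" using h02[OF 3 p] k_minus_2_pos
      by (simp add: divide_le_eq)
    moreover have "(d2 - d0) / (real k - 2) = - ((d0 - d2) / (real k - 2))"
      by (metis minus_diff_eq minus_divide_left)
    ultimately have "w (bwd p) \<ge> Phi d0 d1 d2 p - Phi d0 d1 d2 (Suc p mod k)"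
      using Phi_step[OF 3 p, of d0 d1 d2] by linarith
    then show ?thesis using bq hd tl by simp
  qed
qed

lemma potential_below_costs:
  assumes d: "0 \<le> d0" "d0 \<le> 27" "0 \<le> d1" "d1 \<le> 27" "0 \<le> d2" "d2 \<le> 27"
    and h01: "w (fwd 0) \<ge> d1 - d0" and h10: "w (bwd 0) \<ge> d0 - d1"
    and h12: "w (fwd 1) \<ge> d2 - d1" and h21: "w (bwd 1) \<ge> d1 - d2"
    and h20: "\<And>p. 2 \<le> p \<Longrightarrow> p < k \<Longrightarrow> w (fwd p) * (real k - 2) \<ge> d0 - d2"
    and h02: "\<And>p. 2 \<le> p \<Longrightarrow> p < k \<Longrightarrow> w (bwd p) * (real k - 2) \<ge> d2 - d0"
    and other: "\<And>a. fst a \<in> E \<Longrightarrow> a \<notin> range fwd \<Longrightarrow> a \<notin> range bwd \<Longrightarrow> w a \<ge> 100"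
    and a: "fst a \<in> E"
  shows "w a \<ge> potential d0 d1 d2 (arc_head ends a) - potential d0 d1 d2 (arc_tail ends a)"
proof -
  consider (F) q where "a = fwd q" | (B) q where "a = bwd q" | (O) "a \<notin> range fwd" "a \<notin> range bwd"
    by blast
  then show ?thesis
  proof cases
    case F then show ?thesis using potential_below_fwd[OF h01 h12 h20] by simp
  next
    case B then show ?thesis using potential_below_bwd[OF h10 h21 h02] by simp
  next
    case O
    have "w a \<ge> 100" using other[OF a O] .
    moreover have "potential d0 d1 d2 (arc_head ends a) \<le> 27" "0 \<le> potential d0 d1 d2 (arc_tail ends a)"
      using potential_bounds[OF d] by auto
    ultimately show ?thesis by simp
  qed
qed

lemma optimal_by_potential:
  assumes P: "is_route E ends s t P"
    and other: "\<And>a. a \<notin> range fwd \<Longrightarrow> a \<notin> range bwd \<Longrightarrow> flow {0..7} \<sigma> a = 0"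
    and d: "0 \<le> da" "da \<le> 27" "0 \<le> db" "db \<le> 27" "0 \<le> dc" "dc \<le> 27"
    and h01: "arc_cost g \<sigma> (fwd 0) \<ge> db - da" and h10: "arc_cost g \<sigma> (bwd 0) \<ge> da - db"
    and h12: "arc_cost g \<sigma> (fwd 1) \<ge> dc - db" and h21: "arc_cost g \<sigma> (bwd 1) \<ge> db - dc"
    and h20: "\<And>p. 2 \<le> p \<Longrightarrow> p < k \<Longrightarrow> arc_cost g \<sigma> (fwd p) * (real k - 2) \<ge> da - dc"
    and h02: "\<And>p. 2 \<le> p \<Longrightarrow> p < k \<Longrightarrow> arc_cost g \<sigma> (bwd p) * (real k - 2) \<ge> dc - da"
    and P0: "sum_list (map (arc_cost g \<sigma>) P0) = potential da db dc t - potential da db dc s"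
  shows "sum_list (map (arc_cost g \<sigma>) P0) \<le> sum_list (map (arc_cost g \<sigma>) P)"
proof -
  have "arc_cost g \<sigma> a \<ge> potential da db dc (arc_head ends a) - potential da db dc (arc_tail ends a)"
    if "fst a \<in> E" for a
  proof (rule potential_below_costs[OF d h01 h10 h12 h21 h20 h02 _ that])
    fix a assume "a \<notin> range fwd" "a \<notin> range bwd"
    then show "arc_cost g \<sigma> a \<ge> 100" unfolding arc_cost_def using class_cost_other other by simp
  qed
  then have "sum_list (map (arc_cost g \<sigma>) P) \<ge> potential da db dc t - potential da db dc s"
    by (rule route_cost_potential_bound[OF P])
  then show ?thesis using P0 by simp
qed

lemma sigma1_optimal_A:
  assumes "is_route E ends (v 0) (v 2) P"
  shows "sum_list (map (arc_cost 0 sigma1) A1) \<le> sum_list (map (arc_cost 0 sigma1) P)"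
proof (rule optimal_by_potential[where da=0 and db=24 and dc=26, OF assms flow1_other])
  show "sum_list (map (arc_cost 0 sigma1) A1) = potential 0 24 26 (v 2) - potential 0 24 26 (v 0)"
    unfolding A1_eq using k_ge_3 cost1_fwd[of 0 0] cost1_fwd[of 1 0]
    k_pos potential_v012 by (simp add: slope_def quad_def)
qed (use k_pos k_ge_3 k_minus_2_pos in \<open>simp_all add: cost1_fwd cost1_bwd slope_def quad_def field_simps\<close>)

lemma sigma2_optimal_A:
  assumes "is_route E ends (v 0) (v 2) P"
  shows "sum_list (map (arc_cost 0 sigma2) A2) \<le> sum_list (map (arc_cost 0 sigma2) P)"
proof (rule optimal_by_potential[where da=0 and db=18 and dc=18, OF assms flow2_other])
  have "sum_list (map (arc_cost 0 sigma2) (bwd_walk 0 (k-2))) = 18"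
    by (rule sum_long_bwd_walk) (simp add: cost2_bwd slope_def quad_def)
  then show "sum_list (map (arc_cost 0 sigma2) A2) = potential 0 18 18 (v 2) - potential 0 18 18 (v 0)"
    unfolding A2_def using potential_v012 by simp
qed (use k_pos k_ge_3 k_minus_2_pos in \<open>simp_all add: cost2_fwd cost2_bwd slope_def quad_def field_simps\<close>)

lemma sigma1_optimal_B:
  assumes "is_route E ends (v 0) (v 1) P"
  shows "sum_list (map (arc_cost 1 sigma1) B1) \<le> sum_list (map (arc_cost 1 sigma1) P)"
proof (rule optimal_by_potential[where da=0 and db=27 and dc=15, OF assms flow1_other])
  have "sum_list (map (arc_cost 1 sigma1) (bwd_walk 0 (k-2))) = 15"
    by (rule sum_long_bwd_walk) (simp add: cost1_bwd slope_def quad_def)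
  then show "sum_list (map (arc_cost 1 sigma1) B1) = potential 0 27 15 (v 1) - potential 0 27 15 (v 0)"
    unfolding B1_eq using k_ge_3 cost1_bwd[of 1 1] k_pos potential_v012 by (simp add: slope_def quad_def)
qed (use k_pos k_ge_3 k_minus_2_pos in \<open>simp_all add: cost1_fwd cost1_bwd slope_def quad_def field_simps\<close>)

lemma sigma2_optimal_B:
  assumes "is_route E ends (v 0) (v 1) P"
  shows "sum_list (map (arc_cost 1 sigma2) B2) \<le> sum_list (map (arc_cost 1 sigma2) P)"
proof (rule optimal_by_potential[where da=0 and db=18 and dc=10, OF assms flow2_other])
  show "sum_list (map (arc_cost 1 sigma2) B2) = potential 0 18 10 (v 1) - potential 0 18 10 (v 0)"
    unfolding B2_eq using k_ge_3 cost2_fwd[of 0 1] k_pos potential_v012 by (simp add: slope_def quad_def)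
qed (use k_pos k_ge_3 k_minus_2_pos in \<open>simp_all add: cost2_fwd cost2_bwd slope_def quad_def field_simps\<close>)

lemma sigma1_optimal_C:
  assumes "is_route E ends (v 2) (v 1) P"
  shows "sum_list (map (arc_cost 2 sigma1) C1) \<le> sum_list (map (arc_cost 2 sigma1) P)"
proof (rule optimal_by_potential[where da=2 and db=26 and dc=0, OF assms flow1_other])
  have "sum_list (map (arc_cost 2 sigma1) (fwd_walk 2 (k-2))) = 2"
    by (rule sum_long_fwd_walk) (simp add: cost1_fwd slope_def quad_def)
  then show "sum_list (map (arc_cost 2 sigma1) C1) = potential 2 26 0 (v 1) - potential 2 26 0 (v 2)"
    unfolding C1_eq using k_ge_3 cost1_fwd[of 0 2] k_pos potential_v012 by (simp add: slope_def quad_def)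
qed (use k_pos k_ge_3 k_minus_2_pos in \<open>simp_all add: cost1_fwd cost1_bwd slope_def quad_def field_simps\<close>)

lemma sigma2_optimal_C:
  assumes "is_route E ends (v 2) (v 1) P"
  shows "sum_list (map (arc_cost 2 sigma2) C2) \<le> sum_list (map (arc_cost 2 sigma2) P)"
proof (rule optimal_by_potential[where da=0 and db=18 and dc=0, OF assms flow2_other])
  show "sum_list (map (arc_cost 2 sigma2) C2) = potential 0 18 0 (v 1) - potential 0 18 0 (v 2)"
    unfolding C2_eq using k_ge_3 cost2_bwd[of 1 2] k_pos potential_v012 by (simp add: slope_def quad_def)
qed (use k_pos k_ge_3 k_minus_2_pos in \<open>simp_all add: cost2_fwd cost2_bwd slope_def quad_def field_simps\<close>)

lemma group0: "u \<le> 2 \<Longrightarrow> group u = 0" and group1: "\<not> u \<le> 2 \<Longrightarrow> u \<le> 5 \<Longrightarrow> group u = 1"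
  and group2: "\<not> u \<le> 2 \<Longrightarrow> \<not> u \<le> 5 \<Longrightarrow> group u = 2"
  unfolding group_def by auto

lemma equilibrium_sigma1: "equilibrium E ends {0..7} od_pairs costs sigma1"
  unfolding equilibrium_def
proof (intro conjI profile_sigma1 ballI allI impI)
  fix u :: real and P assume u: "u \<in> {0..7}" and P: "is_route E ends (fst (od_pairs u)) (snd (od_pairs u)) P"
  consider "u \<le> 2" | "\<not> u \<le> 2" "u \<le> 5" | "\<not> u \<le> 2" "\<not> u \<le> 5" by blast
  then show "route_cost {0..7} costs sigma1 u (sigma1 u) \<le> route_cost {0..7} costs sigma1 u P"
  proof cases
    case 1 then show ?thesis using sigma1_optimal_A[of P] P unfolding route_cost_costs od_pairs_def sigma1_def by (simp add: group0)
  next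
    case 2 then show ?thesis using sigma1_optimal_B[of P] P unfolding route_cost_costs od_pairs_def sigma1_def by (simp add: group1)
  next
    case 3 then show ?thesis using sigma1_optimal_C[of P] P unfolding route_cost_costs od_pairs_def sigma1_def by (simp add: group2)
  qed
qed

lemma equilibrium_sigma2: "equilibrium E ends {0..7} od_pairs costs sigma2"
  unfolding equilibrium_def
proof (intro conjI profile_sigma2 ballI allI impI)
  fix u :: real and P assume u: "u \<in> {0..7}" and P: "is_route E ends (fst (od_pairs u)) (snd (od_pairs u)) P"
  consider "u \<le> 2" | "\<not> u \<le> 2" "u \<le> 5" | "\<not> u \<le> 2" "\<not> u \<le> 5" by blast
  then show "route_cost {0..7} costs sigma2 u (sigma2 u) \<le> route_cost {0..7} costs sigma2 u P"
  proof cases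
    case 1 then show ?thesis using sigma2_optimal_A[of P] P unfolding route_cost_costs od_pairs_def sigma2_def by (simp add: group0)
  next
    case 2 then show ?thesis using sigma2_optimal_B[of P] P unfolding route_cost_costs od_pairs_def sigma2_def by (simp add: group1)
  next
    case 3 then show ?thesis using sigma2_optimal_C[of P] P unfolding route_cost_costs od_pairs_def sigma2_def by (simp add: group2)
  qed
qed

lemma v012_distinct: "v 0 \<noteq> v 1" "v 0 \<noteq> v 2" "v 1 \<noteq> v 2" "v 1 \<noteq> v 0" "v 2 \<noteq> v 0" "v 2 \<noteq> v 1"
  unfolding v_eq using k_ge_3 by auto

lemma demand_digraph_v012: "demand_digraph V {v 0, v 1, v 2} {(v 0, v 2), (v 0, v 1), (v 2, v 1)}"
  unfolding demand_digraph_def using v_in vs_in_V v012_distinct by auto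

lemma valid_od_pairs: "valid_od {(v 0, v 2), (v 0, v 1), (v 2, v 1)} {0..7} od_pairs"
  unfolding valid_od_def
proof (intro conjI ballI)
  fix u :: real assume "u \<in> {0..7}"
  show "od_pairs u \<in> {(v 0, v 2), (v 0, v 1), (v 2, v 1)}" unfolding od_pairs_def by auto
next
  fix p show "{u \<in> {0..7}. od_pairs u = p} \<in> sets lebesgue" unfolding od_pairs_def by (rule three_groups_sets)
qed

text \<open>Both profiles are equilibria, but the arc v_1 -> v_2 carries flow 2 resp. 0.\<close>

lemma not_uniqueness_v012: "\<not> uniqueness_property V E ends {v 0, v 1, v 2} {(v 0, v 2), (v 0, v 1), (v 2, v 1)}"
proof
  assume "uniqueness_property V E ends {v 0, v 1, v 2} {(v 0, v 2), (v 0, v 1), (v 2, v 1)}"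
  then have "flow {0..7} sigma1 (fwd 1) = flow {0..7} sigma2 (fwd 1)"
    unfolding uniqueness_property_def using valid_od_pairs valid_costs_costs equilibrium_sigma1 equilibrium_sigma2 fwd_in_E by blast
  moreover have "flow {0..7} sigma1 (fwd 1) = 2" "flow {0..7} sigma2 (fwd 1) = 0"
    using flow1_fwd[of 1] flow2_fwd[of 1] k_ge_3 by auto
  ultimately show False by simp
qed

lemma not_strong_uniqueness: "\<not> strong_uniqueness V E ends"
  unfolding strong_uniqueness_def using demand_digraph_v012 not_uniqueness_v012 by blast

end

theorem long_cycle_imp_not_strong_uniqueness:
  assumes hc: "has_long_cycle V E ends"
  shows "\<not> strong_uniqueness V E ends"
proof -
  obtain vs where vs: "distinct vs" "length vs \<ge> 3" "set vs \<subseteq> V"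
    "\<forall>i<length vs. \<exists>e\<in>E. {fst (ends e), snd (ends e)} = {vs ! i, vs ! ((i + 1) mod length vs)}"
    using hc unfolding has_long_cycle_def by blast
  have "\<forall>i. \<exists>e. i < length vs \<longrightarrow> e \<in> E \<and> {fst (ends e), snd (ends e)} = {vs ! i, vs ! ((i + 1) mod length vs)}"
    using vs(4) by blast
  then obtain ed where ed: "\<forall>i. i < length vs \<longrightarrow> ed i \<in> E \<and>
      {fst (ends (ed i)), snd (ends (ed i))} = {vs ! i, vs ! ((i + 1) mod length vs)}"
    by metis
  interpret long_cycle V E ends vs ed
    using vs ed by unfold_locales auto
  show ?thesis by (rule not_strong_uniqueness)
qed

theorem theorem3:
  fixes V :: "'v set" and E :: "'e set" and ends :: "'e \<Rightarrow> 'v \<times> 'v"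
  assumes "supply_graph V E ends"
  shows "strong_uniqueness V E ends \<longleftrightarrow> \<not> has_long_cycle V E ends"
  using no_long_cycle_imp_strong_uniqueness[OF assms] long_cycle_imp_not_strong_uniqueness by blast

end
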